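(* Let $K=K'=2$. For every $f\in\mathcal C^2([0,1])$, the process $$f(R^h_t)-f(R^h_0)-\int_0^t(G^0+G^1)f(R^h_s)\,ds,\qquad t\ge0,$$ is a martingale, where for $x\in[0,1]$ $$G^0f(x)=c(1-2x)f'(x)+\int_{(0,1]}y(1-y)\nu(dy)\,[f(x(1-y)+y)-f(x)]+\int_{(0,1]}y(1-y)\nu(dy)\,[f(x(1-y))-f(x)],$$ $$G^1f(x)=\tfrac12cx(1-x)f''(x)+x\int_{(0,1]}(1-y)^2\nu(dy)\,[f(x(1-y)+y)-f(x)]+(1-x)\int_{(0,1]}(1-y)^2\nu(dy)\,[f(x(1-y))-f(x)].$$ That is, $G^0+G^1$ is a generator for $R^h$.
   Context: Fix $c\ge0$ and a measure $\nu$ on $(0,1]$ with $\int_{(0,1]}x^2\nu(dx)<\infty$. Let $R=(R_t)_{t\ge0}$ be the two-type generalized Fleming–Viot process without mutation, identified with the $[0,1]$-valued process $R_t=$ (proportion of type 1), i.e. the Markov process with generator $$Gf(x)=\tfrac12cx(1-x)f''(x)+x\int_{(0,1]}\nu(dy)[f(x(1-y)+y)-f(x)]+(1-x)\int_{(0,1]}\nu(dy)[f(x(1-y))-f(x)],$$ with a random initial value $R_0$ satisfying $\mathbb E[R_0(1-R_0)]>0$. Let $r_2=c+\int_{(0,1]}\nu(dx)\big(1-(1-x)^2-2x(1-x)\big)$. Then $H(t,x)=x(1-x)e^{r_2t}$ is space-time harmonic for $R$ (i.e. $H(t,R_t)$ is a martingale), and $R^h$ denotes the Doob $h$-transform of $R$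 by $H$: the process whose law satisfies $\mathbb P(R^h\in A)=\mathbb E\big(\mathbf 1_A(R)\,H(t,R_t)\big)/\mathbb E[H(0,R_0)]$ for events $A$ determined by the path on $[0,t]$. *)

theory Defs
  imports "HOL-Probability.Probability"
begin

definition C2_01 :: "(real \<Rightarrow> real) \<Rightarrow> (real \<Rightarrow> real) \<Rightarrow> (real \<Rightarrow> real) \<Rightarrow> bool" where
  "C2_01 f f1 f2 \<longleftrightarrow>
     (\<forall>x\<in>{0..1}. (f has_real_derivative f1 x) (at x within {0..1})
               \<and> (f1 has_real_derivative f2 x) (at x within {0..1}))
     \<and> continuous_on {0..1} f2"

definition cadlag :: "(real \<Rightarrow> real) \<Rightarrow> bool" where
  "cadlag g \<longleftrightarrow> (\<forall>t\<ge>0. continuous (at_right t) g) \<and> (\<forall>t>0. \<exists>l. (g \<longlongrightarrow> l) (at_left t))"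

definition natfilt :: "'a measure \<Rightarrow> (real \<Rightarrow> 'a \<Rightarrow> real) \<Rightarrow> real \<Rightarrow> 'a measure" where
  "natfilt M X t = vimage_algebra (space M) (\<lambda>\<omega>. restrict (\<lambda>s. X s \<omega>) {0..t}) (\<Pi>\<^sub>M s\<in>{0..t}. borel)"

definition martingale :: "'a measure \<Rightarrow> (real \<Rightarrow> 'a measure) \<Rightarrow> (real \<Rightarrow> 'a \<Rightarrow> real) \<Rightarrow> bool" where
  "martingale M F X \<longleftrightarrow>
     (\<forall>t\<ge>0. integrable M (X t) \<and> X t \<in> borel_measurable (F t)) \<and>
     (\<forall>s t A. 0 \<le> s \<longrightarrow> s \<le> t \<longrightarrow> A \<in> sets (F s) \<longrightarrow>
        (LINT \<omega>:A|M. X t \<omega>) = (LINT \<omega>:A|M. X s \<omega>))"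

text \<open>Generator G of the two-type generalized Fleming--Viot process (the two jump integrals
  are combined into one integral, so that the compensation of first-order terms is respected).\<close>
definition genG :: "real \<Rightarrow> real measure \<Rightarrow> (real \<Rightarrow> real) \<Rightarrow> (real \<Rightarrow> real) \<Rightarrow> real \<Rightarrow> real" where
  "genG c \<nu> f f2 x = 1/2 * c * x * (1 - x) * f2 x
     + (LINT y:{0<..1}|\<nu>. x * (f (x * (1 - y) + y) - f x) + (1 - x) * (f (x * (1 - y)) - f x))"

definition genG0 :: "real \<Rightarrow> real measure \<Rightarrow> (real \<Rightarrow> real) \<Rightarrow> (real \<Rightarrow> real) \<Rightarrow> real \<Rightarrow> real" where
  "genG0 c \<nu> f f1 x = c * (1 - 2 * x) * f1 x
     + (LINT y:{0<..1}|\<nu>. y * (1 - y) * ((f (x * (1 - y) + y) - f x) + (f (x * (1 - y)) - f x)))"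

definition genG1 :: "real \<Rightarrow> real measure \<Rightarrow> (real \<Rightarrow> real) \<Rightarrow> (real \<Rightarrow> real) \<Rightarrow> real \<Rightarrow> real" where
  "genG1 c \<nu> f f2 x = 1/2 * c * x * (1 - x) * f2 x
     + (LINT y:{0<..1}|\<nu>. (1 - y)^2 * (x * (f (x * (1 - y) + y) - f x) + (1 - x) * (f (x * (1 - y)) - f x)))"

definition r2 :: "real \<Rightarrow> real measure \<Rightarrow> real" where
  "r2 c \<nu> = c + (LINT x:{0<..1}|\<nu>. 1 - (1 - x)^2 - 2 * x * (1 - x))"

definition Hfun :: "real \<Rightarrow> real measure \<Rightarrow> real \<Rightarrow> real \<Rightarrow> real" where
  "Hfun c \<nu> t x = x * (1 - x) * exp (r2 c \<nu> * t)"

end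

theory Submission
  imports Defs
begin

(* For f in C^2([0,1]) and het x = x(1-x) we prove
       het x * (G0 + G1) f x = G (het f) x + r * het x * f x        (x in [0,1]),
   i.e. G0 + G1 is the h-transformed generator f |-> (G(h f) + r h f)/h.  Integrability and
   continuity of the jump integrals against nu follow from O(y^2) bounds on the jump increments
   (Taylor's theorem) and the moment condition int y^2 dnu < oo; a function given on [0,1] is
   handled through its clamped extension to the real line.  The locale
   doob_h_transform transports such means through the change of measure defining R^h and proves:
   if R solves the martingale problem for (het f, g) and het psi = g + r het f, then R^h solves
   it for (f, psi). *)

text \<open>All processes take values in [0,1]; functions given on [0,1] are extended to the whole
  line by precomposing with the clamp map, which makes them globally continuous and bounded.\<close>

definition clamp01 :: "real \<Rightarrow> real" where "clamp01 x = max 0 (min 1 x)"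

lemma clamp01_in: "clamp01 x \<in> {0..1}"
  by (auto simp: clamp01_def)

lemma clamp01_id: "x \<in> {0..1} \<Longrightarrow> clamp01 x = x"
  by (auto simp: clamp01_def)

lemma continuous_on_clamp01_comp:
  assumes "continuous_on {0..1} g" shows "continuous_on UNIV (\<lambda>x. g (clamp01 x))"
proof -
  have "continuous_on UNIV clamp01" unfolding clamp01_def by (intro continuous_intros)
  then show ?thesis by (rule continuous_on_compose2[OF assms]) (auto simp: clamp01_def)
qed

lemma continuous_on_01_bounded:
  fixes q :: "real \<Rightarrow> real"
  assumes "continuous_on {0..1} q" obtains B where "\<And>x. x \<in> {0..1} \<Longrightarrow> \<bar>q x\<bar> \<le> B"
proof -
  have "compact (q ` {0..1::real})" by (intro compact_continuous_image assms) auto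
  then have "bounded (q ` {0..1::real})" by (rule compact_imp_bounded)
  then obtain B where "\<forall>y\<in>q ` {0..1}. norm y \<le> B" unfolding bounded_iff by blast
  then show ?thesis using that[of B] by auto
qed

lemma clamp01_comp_bounded:
  fixes q :: "real \<Rightarrow> real"
  assumes "continuous_on {0..1} q" obtains B where "\<And>x. \<bar>q (clamp01 x)\<bar> \<le> B"
  using continuous_on_01_bounded[OF assms] clamp01_in by metis

text \<open>C^2 on [0,1] together with continuity of g, g1, g2 on the whole line; the latter makes
  the jump increments jointly continuous, hence measurable in the jump size.\<close>
definition C2_global :: "(real \<Rightarrow> real) \<Rightarrow> (real \<Rightarrow> real) \<Rightarrow> (real \<Rightarrow> real) \<Rightarrow> bool" where
  "C2_global g g1 g2 \<longleftrightarrow> C2_01 g g1 g2 \<and> continuous_on UNIV g \<and> continuous_on UNIV g1 \<and> continuous_on UNIV g2"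

lemma C2_01_continuous:
  assumes "C2_01 g g1 g2"
  shows "continuous_on {0..1} g" "continuous_on {0..1} g1" "continuous_on {0..1} g2"
  using assms unfolding C2_01_def by (auto intro: DERIV_continuous_on)

lemma C2_01_clamp:
  assumes "C2_01 g g1 g2"
  shows "C2_global (\<lambda>x. g (clamp01 x)) (\<lambda>x. g1 (clamp01 x)) (\<lambda>x. g2 (clamp01 x))"
proof -
  have d: "((\<lambda>x. h (clamp01 x)) has_real_derivative h' x) (at x within {0..1})"
    if "(h has_real_derivative h' x) (at x within {0..1})" "x \<in> {0..1}" for h h' x
    by (rule has_field_derivative_transform_within[OF that(1), of 1])
       (use that in \<open>auto simp: clamp01_id\<close>)
  have "C2_01 (\<lambda>x. g (clamp01 x)) (\<lambda>x. g1 (clamp01 x)) (\<lambda>x. g2 (clamp01 x))"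
    unfolding C2_01_def
  proof (intro conjI ballI)
    fix x :: real assume x: "x \<in> {0..1}"
    show "((\<lambda>x. g (clamp01 x)) has_real_derivative g1 (clamp01 x)) (at x within {0..1})"
      "((\<lambda>x. g1 (clamp01 x)) has_real_derivative g2 (clamp01 x)) (at x within {0..1})"
      using d[of g g1 x] d[of g1 g2 x] assms x by (auto simp: C2_01_def clamp01_id)
  next
    show "continuous_on {0..1} (\<lambda>x. g2 (clamp01 x))"
      using continuous_on_clamp01_comp[OF C2_01_continuous(3)[OF assms]] continuous_on_subset by blast
  qed
  then show ?thesis unfolding C2_global_def
    using continuous_on_clamp01_comp C2_01_continuous[OF assms] by blast
qed

lemma C2_01_derivative_bound:
  assumes "C2_01 g g1 g2"
  obtains K where "\<And>x. x \<in> {0..1} \<Longrightarrow> \<bar>g1 x\<bar> \<le> K \<and> \<bar>g2 x\<bar> \<le> K"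
proof -
  obtain B1 where "\<And>x. x \<in> {0..1} \<Longrightarrow> \<bar>g1 x\<bar> \<le> B1"
    using continuous_on_01_bounded C2_01_continuous(2)[OF assms] by blast
  moreover obtain B2 where "\<And>x. x \<in> {0..1} \<Longrightarrow> \<bar>g2 x\<bar> \<le> B2"
    using continuous_on_01_bounded C2_01_continuous(3)[OF assms] by blast
  ultimately show ?thesis using that[of "max B1 B2"] by force
qed

lemma lipschitz_from_derivative:
  assumes "\<And>x. x \<in> {0..1} \<Longrightarrow> (h has_real_derivative h' x) (at x within {0..1})"
    and "\<And>x. x \<in> {0..1} \<Longrightarrow> \<bar>h' x\<bar> \<le> K" and "a \<in> {0..1}" "b \<in> {0..1}"
  shows "\<bar>h a - h b\<bar> \<le> K * \<bar>a - b\<bar>"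
  using field_differentiable_bound[of "{0..1}" h h' K a b] assms by auto

lemma taylor_remainder_bound:
  assumes C: "C2_01 g g1 g2" and K: "\<And>x. x \<in> {0..1} \<Longrightarrow> \<bar>g1 x\<bar> \<le> K \<and> \<bar>g2 x\<bar> \<le> K"
    and a: "a \<in> {0..1}" and b: "b \<in> {0..1}"
  shows "\<bar>g a - g b - g1 b * (a - b)\<bar> \<le> K * (a - b)^2"
proof -
  let ?S = "{min a b..max a b}"
  have S: "?S \<subseteq> {0..1}" using a b by auto
  have der: "((\<lambda>z. g z - g1 b * z) has_real_derivative (g1 z - g1 b)) (at z within ?S)"
    if "z \<in> ?S" for z
  proof -
    have "z \<in> {0..1}" using S that by blast
    then have "(g has_real_derivative g1 z) (at z within {0..1})"
      using C by (auto simp: C2_01_def)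
    then have "(g has_real_derivative g1 z) (at z within ?S)" using S by (rule DERIV_subset)
    then show ?thesis by (auto intro!: derivative_eq_intros)
  qed
  have bnd: "norm (g1 z - g1 b) \<le> K * \<bar>a - b\<bar>" if "z \<in> ?S" for z
  proof -
    have z01: "z \<in> {0..1}" using S that by blast
    have "\<bar>g1 z - g1 b\<bar> \<le> K * \<bar>z - b\<bar>"
      using z01 lipschitz_from_derivative[of g1 g2 K z b] C K b by (auto simp: C2_01_def)
    also have "\<dots> \<le> K * \<bar>a - b\<bar>" using that K[OF a] by (intro mult_left_mono) auto
    finally show ?thesis by simp
  qed
  have "norm ((g a - g1 b * a) - (g b - g1 b * b)) \<le> K * \<bar>a - b\<bar> * norm (a - b)"
    by (rule field_differentiable_bound[of ?S, OF _ der bnd]) auto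
  then show ?thesis by (simp add: power2_eq_square algebra_simps)
qed

section \<open>Jump increments of the generators\<close>

definition jumpG0 :: "(real \<Rightarrow> real) \<Rightarrow> real \<Rightarrow> real \<Rightarrow> real" where
  "jumpG0 g x y = y * (1 - y) * ((g (x * (1 - y) + y) - g x) + (g (x * (1 - y)) - g x))"

definition jumpG :: "(real \<Rightarrow> real) \<Rightarrow> real \<Rightarrow> real \<Rightarrow> real" where
  "jumpG g x y = x * (g (x * (1 - y) + y) - g x) + (1 - x) * (g (x * (1 - y)) - g x)"

lemma genG0_jump: "genG0 c \<nu> g g1 x = c * (1 - 2 * x) * g1 x + (LINT y:{0<..1}|\<nu>. jumpG0 g x y)"
  unfolding genG0_def jumpG0_def by simp

lemma genG1_jump:
  "genG1 c \<nu> g g2 x = 1/2 * c * x * (1 - x) * g2 x + (LINT y:{0<..1}|\<nu>. (1 - y)^2 * jumpG g x y)"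
  unfolding genG1_def jumpG_def by simp

lemma genG_jump: "genG c \<nu> g g2 x = 1/2 * c * x * (1 - x) * g2 x + (LINT y:{0<..1}|\<nu>. jumpG g x y)"
  unfolding genG_def jumpG_def by simp

lemma jump_targets_in_01:
  fixes x y :: real
  assumes "x \<in> {0..1}" "y \<in> {0..1}"
  shows "x * (1 - y) + y \<in> {0..1}" "x * (1 - y) \<in> {0..1}"
proof -
  have "x * (1 - y) \<le> 1 * (1 - y)" using assms by (intro mult_le_cancel_right[THEN iffD2]) auto
  then show "x * (1 - y) + y \<in> {0..1}" "x * (1 - y) \<in> {0..1}" using assms by auto
qed

lemma generators_local:
  assumes nu_sets: "sets \<nu> = sets borel" and x: "x \<in> {0..1}"
    and eq: "\<And>z. z \<in> {0..1} \<Longrightarrow> g' z = g z" "\<And>z. z \<in> {0..1} \<Longrightarrow> g1' z = g1 z"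
      "\<And>z. z \<in> {0..1} \<Longrightarrow> g2' z = g2 z"
  shows "genG0 c \<nu> g' g1' x = genG0 c \<nu> g g1 x" "genG1 c \<nu> g' g2' x = genG1 c \<nu> g g2 x"
    "genG c \<nu> g' g2' x = genG c \<nu> g g2 x"
proof -
  have S: "{0<..1::real} \<in> sets \<nu>" using nu_sets by simp
  have j: "jumpG0 g' x y = jumpG0 g x y" "jumpG g' x y = jumpG g x y" if "y \<in> {0<..1}" for y
    using that jump_targets_in_01[OF x, of y] eq x unfolding jumpG0_def jumpG_def by auto
  have "(LINT y:{0<..1}|\<nu>. jumpG0 g' x y) = (LINT y:{0<..1}|\<nu>. jumpG0 g x y)"
    "(LINT y:{0<..1}|\<nu>. (1 - y)^2 * jumpG g' x y) = (LINT y:{0<..1}|\<nu>. (1 - y)^2 * jumpG g x y)"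
    "(LINT y:{0<..1}|\<nu>. jumpG g' x y) = (LINT y:{0<..1}|\<nu>. jumpG g x y)"
    using j by (auto intro!: set_lebesgue_integral_cong[OF S])
  then show "genG0 c \<nu> g' g1' x = genG0 c \<nu> g g1 x" "genG1 c \<nu> g' g2' x = genG1 c \<nu> g g2 x"
    "genG c \<nu> g' g2' x = genG c \<nu> g g2 x"
    using eq(2,3)[OF x] by (simp_all add: genG0_jump genG1_jump genG_jump)
qed

text \<open>The symmetric increment jumpG0 is of order y^2 by the mean value theorem.\<close>
lemma jumpG0_bound:
  assumes C: "C2_01 g g1 g2" and K: "\<And>x. x \<in> {0..1} \<Longrightarrow> \<bar>g1 x\<bar> \<le> K \<and> \<bar>g2 x\<bar> \<le> K"
    and x: "x \<in> {0..1}" and y: "y \<in> {0..1}"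
  shows "\<bar>jumpG0 g x y\<bar> \<le> K * y^2"
proof -
  have K0: "K \<ge> 0" using K[OF x] by auto
  have d: "\<And>z. z \<in> {0..1} \<Longrightarrow> (g has_real_derivative g1 z) (at z within {0..1})"
    using C by (auto simp: C2_01_def)
  have "(x * (1 - y) + y) - x = y * (1 - x)" "(x * (1 - y)) - x = - (x * y)"
    by (simp_all add: algebra_simps)
  then have a1: "\<bar>(x * (1 - y) + y) - x\<bar> = y * (1 - x)" and a2: "\<bar>(x * (1 - y)) - x\<bar> = x * y"
    using x y by simp_all
  have e1: "\<bar>g (x * (1 - y) + y) - g x\<bar> \<le> K * (y * (1 - x))"
    using lipschitz_from_derivative[OF d _ jump_targets_in_01(1)[OF x y] x, of K] K a1 by auto
  have e2: "\<bar>g (x * (1 - y)) - g x\<bar> \<le> K * (x * y)"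
    using lipschitz_from_derivative[OF d _ jump_targets_in_01(2)[OF x y] x, of K] K a2 by auto
  have "\<bar>jumpG0 g x y\<bar> = y * (1 - y) * \<bar>(g (x * (1 - y) + y) - g x) + (g (x * (1 - y)) - g x)\<bar>"
    using y by (simp add: jumpG0_def abs_mult)
  also have "\<dots> \<le> y * (1 - y) * (K * (y * (1 - x)) + K * (x * y))"
    using y e1 e2 by (intro mult_left_mono) auto
  also have "\<dots> = K * y^2 * (1 - y)" by (simp add: algebra_simps power2_eq_square)
  also have "\<dots> \<le> K * y^2" using y K0 by (intro mult_left_le) auto
  finally show ?thesis .
qed

text \<open>In jumpG the first-order terms cancel (x*y(1-x) - (1-x)*x*y = 0), so Taylor's theorem
  gives an O(y^2) bound as well.\<close>
lemma jumpG_bound: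
  assumes C: "C2_01 g g1 g2" and K: "\<And>x. x \<in> {0..1} \<Longrightarrow> \<bar>g1 x\<bar> \<le> K \<and> \<bar>g2 x\<bar> \<le> K"
    and x: "x \<in> {0..1}" and y: "y \<in> {0..1}"
  shows "\<bar>jumpG g x y\<bar> \<le> K * y^2"
proof -
  have K0: "K \<ge> 0" using K[OF x] by auto
  define e1 where "e1 = g (x * (1 - y) + y) - g x - g1 x * (y * (1 - x))"
  define e2 where "e2 = g (x * (1 - y)) - g x - g1 x * (- (x * y))"
  have b1: "\<bar>e1\<bar> \<le> K * (y * (1 - x))^2"
    using taylor_remainder_bound[OF C K jump_targets_in_01(1)[OF x y] x]
    unfolding e1_def by (simp add: algebra_simps)
  have b2: "\<bar>e2\<bar> \<le> K * (x * y)^2"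
    using taylor_remainder_bound[OF C K jump_targets_in_01(2)[OF x y] x]
    unfolding e2_def by (simp add: algebra_simps power2_eq_square)
  have "jumpG g x y = x * e1 + (1 - x) * e2"
    unfolding jumpG_def e1_def e2_def by (simp add: algebra_simps)
  then have "\<bar>jumpG g x y\<bar> \<le> x * \<bar>e1\<bar> + (1 - x) * \<bar>e2\<bar>"
    using x by (simp add: abs_mult abs_triangle_ineq[THEN order_trans])
  also have "\<dots> \<le> x * (K * (y * (1 - x))^2) + (1 - x) * (K * (x * y)^2)"
    using x b1 b2 by (intro add_mono mult_left_mono) auto
  also have "\<dots> = K * y^2 * (x * (1 - x))" by (simp add: algebra_simps power2_eq_square)
  also have "\<dots> \<le> K * y^2"
    using x K0 by (intro mult_left_le) (auto intro: mult_le_one)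
  finally show ?thesis .
qed

section \<open>Parameter integrals against \<nu>\<close>

lemma measurable_nu:
  assumes "sets \<nu> = sets borel" "h \<in> borel_measurable borel"
  shows "h \<in> borel_measurable \<nu>"
  using assms measurable_cong_sets[OF assms(1) refl] by simp

text \<open>The moment condition makes y^2 integrable against \<nu>; it dominates all jump integrands.\<close>
lemma integrable_square_nu:
  assumes nu_sets: "sets \<nu> = sets borel" and nu_fin: "(\<integral>\<^sup>+ x. ennreal (x^2) \<partial>\<nu>) < \<infinity>"
  shows "integrable \<nu> (\<lambda>y::real. y^2)"
proof (rule integrableI_nonneg)
  show "(\<lambda>y::real. y^2) \<in> borel_measurable \<nu>" by (rule measurable_nu[OF nu_sets]) simp
qed (use nu_fin in simp_all)

text \<open>Dominated convergence with the dominating function C y^2: a kernel that is continuous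
  in x and O(y^2) uniformly in x has a continuous, everywhere defined jump integral.\<close>
lemma nu_parameter_integral:
  fixes F :: "real \<Rightarrow> real \<Rightarrow> real"
  assumes nu_sets: "sets \<nu> = sets borel" and nu_fin: "(\<integral>\<^sup>+ x. ennreal (x^2) \<partial>\<nu>) < \<infinity>"
    and Fm: "\<And>x. (\<lambda>y. F x y) \<in> borel_measurable borel"
    and Fc: "\<And>y. y \<in> {0<..1} \<Longrightarrow> continuous_on {0..1} (\<lambda>x. F x y)"
    and Fb: "\<And>x y. x \<in> {0..1} \<Longrightarrow> y \<in> {0<..1} \<Longrightarrow> \<bar>F x y\<bar> \<le> C * y^2"
  shows "\<And>x. x \<in> {0..1} \<Longrightarrow> set_integrable \<nu> {0<..1} (F x)"
    and "continuous_on {0..1} (\<lambda>x. LINT y:{0<..1}|\<nu>. F x y)"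
proof -
  have w: "integrable \<nu> (\<lambda>y. \<bar>C\<bar> * y^2)" using integrable_square_nu[OF nu_sets nu_fin] by simp
  have sm: "(\<lambda>y. indicator {0<..1} y *\<^sub>R F x y) \<in> borel_measurable \<nu>" for x
    by (rule measurable_nu[OF nu_sets]) (intro borel_measurable_scaleR borel_measurable_indicator Fm; simp)
  have bnd: "norm (indicator {0<..1} y *\<^sub>R F x y) \<le> \<bar>C\<bar> * y^2" if "x \<in> {0..1}" for x y
  proof (cases "y \<in> {0<..1}")
    case True
    then have "\<bar>F x y\<bar> \<le> C * y^2" using Fb that by auto
    also have "\<dots> \<le> \<bar>C\<bar> * y^2" by (intro mult_right_mono) auto
    finally show ?thesis using True by simp
  qed simp
  show "set_integrable \<nu> {0<..1} (F x)" if "x \<in> {0..1}" for x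
    unfolding set_integrable_def
    by (rule Bochner_Integration.integrable_bound[OF w sm]) (rule AE_I2, use bnd[OF that] in simp)
  show "continuous_on {0..1} (\<lambda>x. LINT y:{0<..1}|\<nu>. F x y)"
  proof (rule continuous_on_sequentiallyI)
    fix u :: "nat \<Rightarrow> real" and a assume u: "\<forall>n. u n \<in> {0..1}" "a \<in> {0..1}" "u \<longlonglongrightarrow> a"
    show "(\<lambda>n. LINT y:{0<..1}|\<nu>. F (u n) y) \<longlonglongrightarrow> (LINT y:{0<..1}|\<nu>. F a y)"
      unfolding set_lebesgue_integral_def
    proof (rule integral_dominated_convergence[OF sm sm w])
      show "AE y in \<nu>. (\<lambda>n. indicator {0<..1} y *\<^sub>R F (u n) y) \<longlonglongrightarrow> indicator {0<..1} y *\<^sub>R F a y"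
      proof (rule AE_I2)
        fix y show "(\<lambda>n. indicator {0<..1} y *\<^sub>R F (u n) y) \<longlonglongrightarrow> indicator {0<..1} y *\<^sub>R F a y"
        proof (cases "y \<in> {0<..1}")
          case True
          have "(\<lambda>n. F (u n) y) \<longlonglongrightarrow> F a y"
            using Fc[OF True] u unfolding continuous_on_sequentially comp_def by blast
          then show ?thesis by (intro tendsto_intros)
        qed simp
      qed
      show "AE y in \<nu>. norm (indicator {0<..1} y *\<^sub>R F (u n) y) \<le> \<bar>C\<bar> * y^2" for n
        using bnd u(1) by (intro AE_I2) blast
    qed
  qed
qed

context
  fixes \<nu> :: "real measure" and g g1 g2 :: "real \<Rightarrow> real"
  assumes nu_sets: "sets \<nu> = sets borel" and nu_fin: "(\<integral>\<^sup>+ x. ennreal (x^2) \<partial>\<nu>) < \<infinity>"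
    and C: "C2_global g g1 g2"
begin

private lemma g_continuous: "continuous_on UNIV g"
  using C by (simp add: C2_global_def)

private lemma g_C2: "C2_01 g g1 g2"
  using C by (simp add: C2_global_def)

private lemma jumpG0_continuous: "continuous_on UNIV (\<lambda>p::real \<times> real. jumpG0 g (fst p) (snd p))"
  unfolding jumpG0_def by (intro continuous_intros continuous_on_compose2[OF g_continuous]) auto

private lemma jumpG_continuous: "continuous_on UNIV (\<lambda>p::real \<times> real. jumpG g (fst p) (snd p))"
  unfolding jumpG_def by (intro continuous_intros continuous_on_compose2[OF g_continuous]) auto

private lemma continuous_sections:
  assumes "continuous_on UNIV (\<lambda>p::real \<times> real. F (fst p) (snd p))"
  shows "continuous_on UNIV (\<lambda>y. F x y)" "continuous_on S (\<lambda>x. F x y)"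
proof -
  have "continuous_on UNIV (\<lambda>y. (x, y))" "continuous_on S (\<lambda>x. (x, y))"
    by (intro continuous_intros)+
  from continuous_on_compose2[OF assms this(1)] continuous_on_compose2[OF assms this(2)]
  show "continuous_on UNIV (\<lambda>y. F x y)" "continuous_on S (\<lambda>x. F x y)" by simp_all
qed

lemma jump_integrals:
  shows "x \<in> {0..1} \<Longrightarrow> set_integrable \<nu> {0<..1} (jumpG0 g x)"
    "x \<in> {0..1} \<Longrightarrow> set_integrable \<nu> {0<..1} (jumpG g x)"
    "x \<in> {0..1} \<Longrightarrow> set_integrable \<nu> {0<..1} (\<lambda>y. (1 - y)^2 * jumpG g x y)"
    and "continuous_on {0..1} (\<lambda>x. LINT y:{0<..1}|\<nu>. jumpG0 g x y)"
    "continuous_on {0..1} (\<lambda>x. LINT y:{0<..1}|\<nu>. jumpG g x y)"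
    "continuous_on {0..1} (\<lambda>x. LINT y:{0<..1}|\<nu>. (1 - y)^2 * jumpG g x y)"
proof -
  obtain K where K: "\<And>x. x \<in> {0..1} \<Longrightarrow> \<bar>g1 x\<bar> \<le> K \<and> \<bar>g2 x\<bar> \<le> K"
    by (rule C2_01_derivative_bound[OF g_C2]) blast
  note sec0 = continuous_sections[OF jumpG0_continuous] and sec = continuous_sections[OF jumpG_continuous]
  note int = nu_parameter_integral[OF nu_sets nu_fin borel_measurable_continuous_onI]
  have b0: "\<bar>jumpG0 g x y\<bar> \<le> K * y^2" and b: "\<bar>jumpG g x y\<bar> \<le> K * y^2"
    if "x \<in> {0..1}" "y \<in> {0<..1}" for x y
    using jumpG0_bound[OF g_C2 K] jumpG_bound[OF g_C2 K] that by auto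
  have b2: "\<bar>(1 - y)^2 * jumpG g x y\<bar> \<le> K * y^2" if "x \<in> {0..1}" "y \<in> {0<..1}" for x y
  proof -
    have "(1 - y)^2 \<le> 1" using that by (simp add: power_le_one)
    then have "(1 - y)^2 * \<bar>jumpG g x y\<bar> \<le> 1 * \<bar>jumpG g x y\<bar>"
      by (rule mult_right_mono) simp
    then show ?thesis using b[OF that] by (simp add: abs_mult)
  qed
  have c2: "continuous_on S (\<lambda>x. (1 - y)^2 * jumpG g x y)" "continuous_on UNIV (\<lambda>y. (1 - y)^2 * jumpG g x y)"
    for S x y using sec by (auto intro!: continuous_intros)
  show "x \<in> {0..1} \<Longrightarrow> set_integrable \<nu> {0<..1} (jumpG0 g x)"
    "continuous_on {0..1} (\<lambda>x. LINT y:{0<..1}|\<nu>. jumpG0 g x y)"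
    using int[OF sec0(1) sec0(2) b0] by auto
  show "x \<in> {0..1} \<Longrightarrow> set_integrable \<nu> {0<..1} (jumpG g x)"
    "continuous_on {0..1} (\<lambda>x. LINT y:{0<..1}|\<nu>. jumpG g x y)"
    using int[OF sec(1) sec(2) b] by auto
  show "x \<in> {0..1} \<Longrightarrow> set_integrable \<nu> {0<..1} (\<lambda>y. (1 - y)^2 * jumpG g x y)"
    "continuous_on {0..1} (\<lambda>x. LINT y:{0<..1}|\<nu>. (1 - y)^2 * jumpG g x y)"
    using int[OF c2(2) c2(1) b2] by auto
qed

end

text \<open>The three generators applied to a C^2 function are continuous on [0,1]; the general
  case reduces to the globally continuous one by clamping and locality.\<close>
lemma generators_continuous:
  assumes nu_sets: "sets \<nu> = sets borel" and nu_fin: "(\<integral>\<^sup>+ x. ennreal (x^2) \<partial>\<nu>) < \<infinity>"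
    and C: "C2_01 g g1 g2"
  shows "continuous_on {0..1} (genG0 c \<nu> g g1)" "continuous_on {0..1} (genG1 c \<nu> g g2)"
    "continuous_on {0..1} (genG c \<nu> g g2)"
proof -
  define gc g1c g2c where "gc x = g (clamp01 x)" and "g1c x = g1 (clamp01 x)" and "g2c x = g2 (clamp01 x)" for x
  have Cc: "C2_global gc g1c g2c" unfolding gc_def g1c_def g2c_def by (rule C2_01_clamp[OF C])
  have eq: "\<And>z. z \<in> {0..1} \<Longrightarrow> gc z = g z" "\<And>z. z \<in> {0..1} \<Longrightarrow> g1c z = g1 z"
    "\<And>z. z \<in> {0..1} \<Longrightarrow> g2c z = g2 z"
    by (simp_all add: gc_def g1c_def g2c_def clamp01_id)
  have d: "continuous_on {0..1} g1c" "continuous_on {0..1} g2c"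
    using Cc unfolding C2_global_def by (auto intro: continuous_on_subset)
  note J = jump_integrals[OF nu_sets nu_fin Cc]
  have c: "continuous_on {0..1} (genG0 c \<nu> gc g1c)" "continuous_on {0..1} (genG1 c \<nu> gc g2c)"
    "continuous_on {0..1} (genG c \<nu> gc g2c)"
    unfolding genG0_jump[abs_def] genG1_jump[abs_def] genG_jump[abs_def]
    using d J(4-6) by (auto intro!: continuous_intros)
  note loc = generators_local[OF nu_sets _ eq]
  show "continuous_on {0..1} (genG0 c \<nu> g g1)" "continuous_on {0..1} (genG1 c \<nu> g g2)"
    "continuous_on {0..1} (genG c \<nu> g g2)"
    by (rule continuous_on_eq[OF c(1) loc(1)] continuous_on_eq[OF c(2) loc(2)]
        continuous_on_eq[OF c(3) loc(3)]; simp)+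
qed

section \<open>The h-transformed generator\<close>

text \<open>het x = x(1-x) is the spatial part of the space-time harmonic function H.\<close>
definition het :: "real \<Rightarrow> real" where "het x = x * (1 - x)"

lemma het_clamp01_bounds: "0 \<le> het (clamp01 x)" "het (clamp01 x) \<le> 1"
  using clamp01_in[of x] unfolding het_def by (auto intro: mult_le_one)

lemma C2_01_mult_het:
  assumes "C2_01 f f1 f2"
  shows "C2_01 (\<lambda>x. het x * f x) (\<lambda>x. (1 - 2 * x) * f x + het x * f1 x)
             (\<lambda>x. - 2 * f x + 2 * (1 - 2 * x) * f1 x + het x * f2 x)"
  unfolding C2_01_def
proof (intro conjI ballI)
  fix x :: real assume x: "x \<in> {0..1}"
  have d1: "(f has_real_derivative f1 x) (at x within {0..1})"
    and d2: "(f1 has_real_derivative f2 x) (at x within {0..1})"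
    using assms x by (auto simp: C2_01_def)
  show "((\<lambda>x. het x * f x) has_real_derivative (1 - 2 * x) * f x + het x * f1 x) (at x within {0..1})"
    "((\<lambda>x. (1 - 2 * x) * f x + het x * f1 x) has_real_derivative
        - 2 * f x + 2 * (1 - 2 * x) * f1 x + het x * f2 x) (at x within {0..1})"
    unfolding het_def by (auto intro!: derivative_eq_intros d1 d2 simp: algebra_simps)
next
  show "continuous_on {0..1} (\<lambda>x. - 2 * f x + 2 * (1 - 2 * x) * f1 x + het x * f2 x)"
    unfolding het_def using C2_01_continuous[OF assms] by (auto intro!: continuous_intros)
qed

text \<open>The pointwise identity behind the theorem: jumps of het*f decompose into
  het*(symmetric jumps of f) and (1-y)^2 het*(jumps of f), up to the compensator y^2 het f.\<close>
lemma jump_het_identity: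
  "jumpG (\<lambda>x. het x * f x) x y + het x * f x * y^2 = het x * jumpG0 f x y + het x * ((1 - y)^2 * jumpG f x y)"
  unfolding jumpG0_def jumpG_def het_def by algebra

lemma r2_moment: "r2 c \<nu> = c + (LINT y:{0<..1}|\<nu>. y^2)"
proof -
  have "(\<lambda>x::real. 1 - (1 - x)^2 - 2 * x * (1 - x)) = (\<lambda>x. x^2)" by (rule ext) algebra
  then show ?thesis unfolding r2_def by simp
qed

text \<open>Integrating the pointwise identity against \<nu> gives the generator identity,
  first for globally continuous C^2 functions, where all jump integrals exist.\<close>
lemma generator_identity_global:
  assumes nu_sets: "sets \<nu> = sets borel" and nu_fin: "(\<integral>\<^sup>+ x. ennreal (x^2) \<partial>\<nu>) < \<infinity>"
    and C: "C2_global f f1 f2" and x: "x \<in> {0..1}"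
  shows "het x * (genG0 c \<nu> f f1 x + genG1 c \<nu> f f2 x)
     = genG c \<nu> (\<lambda>x. het x * f x) (\<lambda>x. - 2 * f x + 2 * (1 - 2 * x) * f1 x + het x * f2 x) x
       + r2 c \<nu> * (het x * f x)"
proof -
  have Cp: "C2_global (\<lambda>x. het x * f x) (\<lambda>x. (1 - 2 * x) * f x + het x * f1 x)
             (\<lambda>x. - 2 * f x + 2 * (1 - 2 * x) * f1 x + het x * f2 x)"
    using C C2_01_mult_het unfolding C2_global_def het_def by (auto intro!: continuous_intros)
  note J = jump_integrals[OF nu_sets nu_fin C] and Jp = jump_integrals[OF nu_sets nu_fin Cp]
  have iy2: "set_integrable \<nu> {0<..1} (\<lambda>y::real. y^2)"
    unfolding set_integrable_def
    by (rule integrable_mult_indicator) (use nu_sets integrable_square_nu[OF nu_sets nu_fin] in auto)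
  have S: "{0<..1::real} \<in> sets \<nu>" using nu_sets by simp
  define IA IB2 IBp I2 where "IA = (LINT y:{0<..1}|\<nu>. jumpG0 f x y)"
    and "IB2 = (LINT y:{0<..1}|\<nu>. (1 - y)^2 * jumpG f x y)"
    and "IBp = (LINT y:{0<..1}|\<nu>. jumpG (\<lambda>x. het x * f x) x y)"
    and "I2 = (LINT y:{0<..1}|\<nu>. y^2)"
  have "IBp + het x * f x * I2 = (LINT y:{0<..1}|\<nu>. jumpG (\<lambda>x. het x * f x) x y + het x * f x * y^2)"
    unfolding IBp_def I2_def by (simp add: set_integral_add(2)[OF Jp(2)[OF x] set_integrable_mult_right[OF iy2]])
  also have "\<dots> = (LINT y:{0<..1}|\<nu>. het x * jumpG0 f x y + het x * ((1 - y)^2 * jumpG f x y))"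
    by (rule set_lebesgue_integral_cong[OF S]) (simp add: jump_het_identity)
  also have "\<dots> = het x * IA + het x * IB2"
    unfolding IA_def IB2_def
    by (simp add: set_integral_add(2)[OF set_integrable_mult_right[OF J(1)[OF x]] set_integrable_mult_right[OF J(3)[OF x]]])
  finally have key: "IBp = het x * IA + het x * IB2 - het x * f x * I2" by linarith
  show ?thesis
    unfolding genG0_jump genG1_jump genG_jump r2_moment
    unfolding IA_def[symmetric] IB2_def[symmetric] IBp_def[symmetric] I2_def[symmetric] key
    unfolding het_def by algebra
qed

text \<open>The identity for an arbitrary C^2 function on [0,1], via clamping and locality.\<close>
lemma generator_identity:
  assumes nu_sets: "sets \<nu> = sets borel" and nu_fin: "(\<integral>\<^sup>+ x. ennreal (x^2) \<partial>\<nu>) < \<infinity>"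
    and C: "C2_01 f f1 f2" and x: "x \<in> {0..1}"
  shows "het x * (genG0 c \<nu> f f1 x + genG1 c \<nu> f f2 x)
     = genG c \<nu> (\<lambda>x. het x * f x) (\<lambda>x. - 2 * f x + 2 * (1 - 2 * x) * f1 x + het x * f2 x) x
       + r2 c \<nu> * (het x * f x)"
proof -
  define fc f1c f2c where "fc x = f (clamp01 x)" and "f1c x = f1 (clamp01 x)" and "f2c x = f2 (clamp01 x)" for x
  have Cc: "C2_global fc f1c f2c" unfolding fc_def f1c_def f2c_def by (rule C2_01_clamp[OF C])
  have eq: "\<And>z. z \<in> {0..1} \<Longrightarrow> fc z = f z" "\<And>z. z \<in> {0..1} \<Longrightarrow> f1c z = f1 z"
    "\<And>z. z \<in> {0..1} \<Longrightarrow> f2c z = f2 z"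
    by (simp_all add: fc_def f1c_def f2c_def clamp01_id)
  have eq_het: "\<And>z. z \<in> {0..1} \<Longrightarrow> het z * fc z = het z * f z"
    "\<And>z. z \<in> {0..1} \<Longrightarrow> - 2 * fc z + 2 * (1 - 2 * z) * f1c z + het z * f2c z
        = - 2 * f z + 2 * (1 - 2 * z) * f1 z + het z * f2 z"
    using eq by simp_all
  show ?thesis
    using generator_identity_global[OF nu_sets nu_fin Cc x] generators_local(1,2)[OF nu_sets x eq]
      generators_local(3)[OF nu_sets x eq_het(1) refl eq_het(2)] eq[OF x]
    by simp
qed

lemma integrable_bounded_on_finite_set:
  fixes f :: "real \<Rightarrow> real"
  assumes S: "S \<in> sets borel" "emeasure lborel S < \<infinity>" and fm: "f \<in> borel_measurable borel"
    and fb: "\<And>u. u \<in> S \<Longrightarrow> \<bar>f u\<bar> \<le> C"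
  shows "integrable lborel (\<lambda>u. indicator S u * f u)"
proof (rule Bochner_Integration.integrable_bound)
  show "integrable lborel (\<lambda>u. \<bar>C\<bar> * indicator S u)"
    using S by (intro integrable_mult_right integrable_real_indicator) auto
  show "(\<lambda>u. indicator S u * f u) \<in> borel_measurable lborel" using fm S by measurable
  show "AE x in lborel. norm (indicator S x * f x) \<le> norm (\<bar>C\<bar> * indicator S x)"
    using fb by (intro AE_I2) (auto simp: indicator_def intro: order_trans[OF _ abs_ge_self])
qed

lemma integral_bounded_on_finite_set:
  fixes f :: "real \<Rightarrow> real"
  assumes S: "S \<in> sets borel" "emeasure lborel S < \<infinity>" and fm: "f \<in> borel_measurable borel"
    and fb: "\<And>u. u \<in> S \<Longrightarrow> \<bar>f u\<bar> \<le> C"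
  shows "\<bar>\<integral>u. indicator S u * f u \<partial>lborel\<bar> \<le> C * measure lborel S"
proof -
  have "\<bar>\<integral>u. indicator S u * f u \<partial>lborel\<bar> \<le> (\<integral>u. \<bar>indicator S u * f u\<bar> \<partial>lborel)"
    by (rule integral_abs_bound)
  also have "\<dots> \<le> (\<integral>u. C * indicator S u \<partial>lborel)"
  proof (rule integral_mono)
    show "integrable lborel (\<lambda>u. \<bar>indicator S u * f u\<bar>)"
      by (intro integrable_abs integrable_bounded_on_finite_set[OF S fm fb])
    show "integrable lborel (\<lambda>u. C * indicator S u)"
      using S by (intro integrable_mult_right integrable_real_indicator) auto
    show "\<bar>indicator S u * f u\<bar> \<le> C * indicator S u" for u
      using fb[of u] by (auto simp: indicator_def)
  qed
  also have "\<dots> = C * measure lborel S" using S by simp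
  finally show ?thesis .
qed

lemma integrable_bounded_on_product:
  fixes f :: "real \<times> 'b \<Rightarrow> real"
  assumes sf: "sigma_finite_measure M2" and fm: "f \<in> borel_measurable (lborel \<Otimes>\<^sub>M M2)"
    and B: "B \<in> sets M2" "emeasure M2 B < \<infinity>" and ab: "a \<le> b"
    and bnd: "\<And>(u::real) \<omega>. \<omega> \<in> space M2 \<Longrightarrow> \<bar>f (u, \<omega>)\<bar> \<le> C * indicator ({a<..b} \<times> B) (u, \<omega>)"
  shows "integrable (lborel \<Otimes>\<^sub>M M2) f"
proof (rule Bochner_Integration.integrable_bound)
  interpret M2: sigma_finite_measure M2 by (rule sf)
  have "emeasure (lborel \<Otimes>\<^sub>M M2) ({a<..b} \<times> B) = emeasure lborel {a<..b} * emeasure M2 B"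
    by (rule M2.emeasure_pair_measure_Times) (use B in auto)
  also have "\<dots> < \<infinity>" using ab B by (simp add: ennreal_mult_less_top)
  finally show "integrable (lborel \<Otimes>\<^sub>M M2) (\<lambda>p. \<bar>C\<bar> * indicator ({a<..b} \<times> B) p)"
    using B by (intro integrable_mult_right integrable_real_indicator) auto
  show "AE p in lborel \<Otimes>\<^sub>M M2. norm (f p) \<le> norm (\<bar>C\<bar> * indicator ({a<..b} \<times> B) p)"
  proof (rule AE_I2)
    fix p :: "real \<times> 'b" assume "p \<in> space (lborel \<Otimes>\<^sub>M M2)"
    then obtain u \<omega> where p: "p = (u, \<omega>)" "\<omega> \<in> space M2" by (cases p) (auto simp: space_pair_measure)
    have "\<bar>f (u, \<omega>)\<bar> \<le> \<bar>C\<bar> * indicator ({a<..b} \<times> B) (u, \<omega>)"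
      using bnd[OF p(2)] by (rule order_trans) (intro mult_right_mono; simp)
    then show "norm (f p) \<le> norm (\<bar>C\<bar> * indicator ({a<..b} \<times> B) p)" using p by (simp add: indicator_def)
  qed
qed (rule fm)

lemma time_integral_split:
  fixes h :: "real \<Rightarrow> real"
  assumes st: "0 \<le> s" "s \<le> t" and hm: "h \<in> borel_measurable borel" and hb: "\<And>v. \<bar>h v\<bar> \<le> C"
  shows "(\<integral>v. indicator {0..t} v * h v \<partial>lborel) - (\<integral>v. indicator {0..s} v * h v \<partial>lborel)
       = (\<integral>v. indicator {s<..t} v * h v \<partial>lborel)"
proof -
  have "integrable lborel (\<lambda>v. indicator {0..t} v * h v)"
    by (rule integrable_bounded_on_finite_set[OF _ _ hm hb]) (use st in auto)
  moreover have "integrable lborel (\<lambda>v. indicator {0..s} v * h v)"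
    by (rule integrable_bounded_on_finite_set[OF _ _ hm hb]) (use st in auto)
  ultimately have "(\<integral>v. indicator {0..t} v * h v \<partial>lborel) - (\<integral>v. indicator {0..s} v * h v \<partial>lborel)
      = (\<integral>v. indicator {0..t} v * h v - indicator {0..s} v * h v \<partial>lborel)"
    by simp
  also have "\<dots> = (\<integral>v. indicator {s<..t} v * h v \<partial>lborel)"
    using st by (intro Bochner_Integration.integral_cong) (auto simp: indicator_def)
  finally show ?thesis .
qed

section \<open>Joint measurability of right-continuous processes\<close>

definition time_clamp :: "real \<Rightarrow> real \<Rightarrow> real" where "time_clamp t u = max 0 (min t u)"

lemma time_clamp_id: "u \<in> {0..t} \<Longrightarrow> time_clamp t u = u"
  by (auto simp: time_clamp_def)

lemma time_clamp_in: "t \<ge> 0 \<Longrightarrow> time_clamp t u \<in> {0..t}"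
  by (auto simp: time_clamp_def)

text \<open>Dyadic approximation of u from above, used to approximate a right-continuous process
  by processes that are piecewise constant in time.\<close>
lemma dyadic_upper_approx:
  fixes u :: real
  shows "(\<lambda>n. real_of_int \<lceil>u * 2^n\<rceil> / 2^n) \<longlonglongrightarrow> u"
    and "real_of_int \<lceil>u * 2^n\<rceil> / 2^n \<ge> u"
proof -
  have lo: "real_of_int \<lceil>u * 2^n\<rceil> / 2^n \<ge> u" for n
  proof -
    have "u * 2^n \<le> real_of_int \<lceil>u * 2^n\<rceil>" by (rule le_of_int_ceiling)
    then show ?thesis by (simp add: field_simps)
  qed
  have hi: "real_of_int \<lceil>u * 2^n\<rceil> / 2^n \<le> u + inverse (2^n)" for n
  proof -
    have "real_of_int \<lceil>u * 2^n\<rceil> \<le> u * 2^n + 1" using ceiling_correct[of "u * 2^n"] by linarith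
    then show ?thesis by (simp add: field_simps)
  qed
  have "(\<lambda>n. u + inverse ((2::real)^n)) \<longlonglongrightarrow> u + 0"
    by (intro tendsto_intros LIMSEQ_inverse_realpow_zero) simp
  then have up: "(\<lambda>n. u + inverse ((2::real)^n)) \<longlonglongrightarrow> u" by simp
  show "(\<lambda>n. real_of_int \<lceil>u * 2^n\<rceil> / 2^n) \<longlonglongrightarrow> u"
    by (rule tendsto_sandwich[where f="\<lambda>n. u" and h="\<lambda>n. u + inverse (2^n)", OF _ _ tendsto_const up])
       (use lo hi in auto)
  show "real_of_int \<lceil>u * 2^n\<rceil> / 2^n \<ge> u" by (rule lo)
qed

lemma right_continuous_dyadic_limit:
  fixes x :: "real \<Rightarrow> real"
  assumes t: "t \<ge> 0" and xc: "\<And>u. 0 \<le> u \<Longrightarrow> u < t \<Longrightarrow> continuous (at_right u) x"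
  shows "(\<lambda>n. x (time_clamp t (real_of_int \<lceil>u * 2^n\<rceil> / 2^n))) \<longlonglongrightarrow> x (time_clamp t u)"
proof -
  define q where "q n = real_of_int \<lceil>u * 2^n\<rceil> / (2::real)^n" for n
  have qc: "q \<longlonglongrightarrow> u" and qge: "\<And>n. q n \<ge> u"
    unfolding q_def[abs_def] using dyadic_upper_approx by auto
  show ?thesis unfolding q_def[symmetric]
  proof (cases "u < 0 \<or> u \<ge> t")
    case True
    have "time_clamp t (q n) = time_clamp t u" for n
    proof (cases "u < 0")
      case True
      then have "u * 2^n \<le> 0" by (simp add: mult_nonpos_nonneg)
      then have "\<lceil>u * 2^n\<rceil> \<le> 0" by (simp add: ceiling_le_zero)
      then have "q n \<le> 0" unfolding q_def by (simp add: divide_nonpos_pos)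
      then show ?thesis using True t by (auto simp: time_clamp_def)
    next
      case False
      then show ?thesis using \<open>u < 0 \<or> u \<ge> t\<close> qge[of n] t by (auto simp: time_clamp_def)
    qed
    then show "(\<lambda>n. x (time_clamp t (q n))) \<longlonglongrightarrow> x (time_clamp t u)" by simp
  next
    case False
    then have u: "0 \<le> u" "u < t" by auto
    have "continuous (at u within {u..}) x"
      using xc[OF u] by (simp add: at_within_Ici_at_right)
    then have "(\<lambda>n. x (q n)) \<longlonglongrightarrow> x (time_clamp t u)"
      unfolding continuous_within_sequentially using qc qge u by (auto simp: comp_def time_clamp_id)
    moreover have "eventually (\<lambda>n. x (q n) = x (time_clamp t (q n))) sequentially"
      using order_tendstoD(2)[OF qc u(2)]
    proof eventually_elim
      case (elim n)
      then have "q n \<in> {0..t}" using qge[of n] u by auto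
      then show ?case by (simp add: time_clamp_id)
    qed
    ultimately show "(\<lambda>n. x (time_clamp t (q n))) \<longlonglongrightarrow> x (time_clamp t u)"
      by (rule Lim_transform_eventually)
  qed
qed

text \<open>Hence a process that is measurable at each time and right-continuous on [0,t) is
  jointly measurable in (time, sample) once time is frozen outside [0,t]: it is the limit of
  processes that are piecewise constant in time.\<close>
lemma right_continuous_jointly_measurable:
  fixes X :: "real \<Rightarrow> 'a \<Rightarrow> real" and F :: "'a measure"
  assumes t: "t \<ge> 0"
    and Xm: "\<And>u. u \<in> {0..t} \<Longrightarrow> X u \<in> borel_measurable F"
    and Xc: "\<And>\<omega> u. \<omega> \<in> space F \<Longrightarrow> 0 \<le> u \<Longrightarrow> u < t \<Longrightarrow> continuous (at_right u) (\<lambda>v. X v \<omega>)"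
  shows "(\<lambda>p. X (time_clamp t (fst p)) (snd p)) \<in> borel_measurable (lborel \<Otimes>\<^sub>M F)"
proof (rule borel_measurable_LIMSEQ_real)
  show "(\<lambda>p. X (time_clamp t (real_of_int \<lceil>fst p * (2::real)^n\<rceil> / 2^n)) (snd p)) \<in> borel_measurable (lborel \<Otimes>\<^sub>M F)"
    for n :: nat
  proof -
    have "(\<lambda>p. X (time_clamp t (real_of_int i / 2^n)) (snd p)) \<in> borel_measurable (lborel \<Otimes>\<^sub>M F)" for i :: int
      by (rule measurable_compose[OF measurable_snd Xm[OF time_clamp_in[OF t]]])
    moreover have "(\<lambda>p. \<lceil>fst p * (2::real)^n\<rceil>) \<in> measurable (lborel \<Otimes>\<^sub>M F) (count_space UNIV)"
      by measurable
    ultimately show ?thesis by (rule measurable_compose_countable)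
  qed
  fix p :: "real \<times> 'a" assume "p \<in> space (lborel \<Otimes>\<^sub>M F)"
  then have "snd p \<in> space F" by (auto simp: space_pair_measure)
  then show "(\<lambda>n. X (time_clamp t (real_of_int \<lceil>fst p * (2::real)^n\<rceil> / 2^n)) (snd p)) \<longlonglongrightarrow> X (time_clamp t (fst p)) (snd p)"
    using Xc by (intro right_continuous_dyadic_limit[OF t]) auto
qed

lemma time_integral_measurable:
  fixes X :: "real \<Rightarrow> 'a \<Rightarrow> real" and q :: "real \<Rightarrow> real"
  assumes t: "t \<ge> 0"
    and Xm: "\<And>u. u \<in> {0..t} \<Longrightarrow> X u \<in> borel_measurable F"
    and Xc: "\<And>\<omega> u. \<omega> \<in> space F \<Longrightarrow> 0 \<le> u \<Longrightarrow> u < t \<Longrightarrow> continuous (at_right u) (\<lambda>v. X v \<omega>)"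
    and q: "q \<in> borel_measurable borel"
  shows "(\<lambda>\<omega>. \<integral>v. indicator {0..t} v * q (X (time_clamp t v) \<omega>) \<partial>lborel) \<in> borel_measurable F"
proof -
  note J = measurable_compose[OF right_continuous_jointly_measurable[OF t Xm Xc] q]
  have "(\<lambda>(\<omega>, v). indicator {0..t} v * q (X (time_clamp t v) \<omega>)) \<in> borel_measurable (F \<Otimes>\<^sub>M lborel)"
    by (subst measurable_pair_swap_iff) (use J in \<open>simp add: case_prod_beta'\<close>)
  then show ?thesis by (rule lborel.borel_measurable_lebesgue_integral)
qed

abbreviation path_space :: "real \<Rightarrow> (real \<Rightarrow> real) measure" where
  "path_space t \<equiv> \<Pi>\<^sub>M s\<in>{0..t}. (borel :: real measure)"

lemma path_measurable:
  assumes "\<And>u. X u \<in> borel_measurable M"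
  shows "(\<lambda>\<omega>. restrict (\<lambda>s. X s \<omega>) {0..t}) \<in> measurable M (path_space t)"
  using assms by (intro measurable_restrict) auto

lemma path_in_space: "(\<lambda>\<omega>. restrict (\<lambda>s. X s \<omega>) {0..t}) \<in> space M \<rightarrow> space (path_space t)"
  by (auto simp: space_PiM)

lemma natfilt_space: "space (natfilt M X t) = space M"
  by (simp add: natfilt_def)

lemma natfilt_measurable:
  assumes "u \<in> {0..t}"
  shows "X u \<in> borel_measurable (natfilt M X t)"
proof -
  have "(\<lambda>\<omega>. restrict (\<lambda>s. X s \<omega>) {0..t}) \<in> measurable (natfilt M X t) (path_space t)"
    unfolding natfilt_def by (rule measurable_vimage_algebra1[OF path_in_space])
  from measurable_compose[OF this measurable_component_singleton[OF assms]] show ?thesis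
    using assms by simp
qed

lemma natfilt_sets:
  "A \<in> sets (natfilt M X s) \<longleftrightarrow>
     (\<exists>B \<in> sets (path_space s). A = (\<lambda>\<omega>. restrict (\<lambda>u. X u \<omega>) {0..s}) -` B \<inter> space M)"
  unfolding natfilt_def sets_vimage_algebra2[OF path_in_space] by blast

lemma natfilt_subset:
  assumes "\<And>u. X u \<in> borel_measurable M" "A \<in> sets (natfilt M X s)"
  shows "A \<in> sets M"
proof -
  obtain B where "B \<in> sets (path_space s)" "A = (\<lambda>\<omega>. restrict (\<lambda>u. X u \<omega>) {0..s}) -` B \<inter> space M"
    using assms(2) unfolding natfilt_sets by blast
  then show ?thesis using measurable_sets[OF path_measurable[OF assms(1)]] by simp
qed

section \<open>A product rule for exponentially weighted indefinite integrals\<close>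

lemma integral_exp_derivative:
  fixes a b r :: real
  assumes "a \<le> b"
  shows "(\<integral>u. indicator {a<..b} u * (r * exp (r * u)) \<partial>lborel) = exp (r * b) - exp (r * a)"
proof -
  have "(\<integral>u. indicator {a..b} u *\<^sub>R (r * exp (r * u)) \<partial>lborel) = exp (r * b) - exp (r * a)"
  proof (rule integral_FTC_atLeastAtMost[OF assms])
    fix x assume "a \<le> x" "x \<le> b"
    have "((\<lambda>u. exp (r * u)) has_real_derivative exp (r * x) * r) (at x within {a..b})"
      by (auto intro!: derivative_eq_intros)
    then show "((\<lambda>u. exp (r * u)) has_vector_derivative r * exp (r * x)) (at x within {a..b})"
      by (simp add: has_real_derivative_iff_has_vector_derivative mult.commute)
  qed (intro continuous_intros)
  moreover have "(\<integral>u. indicator {a<..b} u * (r * exp (r * u)) \<partial>lborel)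
      = (\<integral>u. indicator {a..b} u *\<^sub>R (r * exp (r * u)) \<partial>lborel)"
  proof (rule integral_cong_AE)
    show "AE x in lborel. indicator {a<..b} x * (r * exp (r * x)) = indicator {a..b} x *\<^sub>R (r * exp (r * x))"
      using AE_lborel_singleton[of a] by eventually_elim (auto simp: indicator_def)
  qed measurable
  ultimately show ?thesis by simp
qed

lemma exp_bound_on_interval:
  fixes u r s t :: real
  assumes "u \<in> {s<..t}" shows "\<bar>exp (r * u)\<bar> \<le> exp (\<bar>r\<bar> * (\<bar>s\<bar> + \<bar>t\<bar>))"
proof -
  have "r * u \<le> \<bar>r\<bar> * \<bar>u\<bar>" by (metis abs_ge_self abs_mult)
  also have "\<dots> \<le> \<bar>r\<bar> * (\<bar>s\<bar> + \<bar>t\<bar>)" using assms by (intro mult_left_mono) auto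
  finally show ?thesis by simp
qed

lemma indefinite_integral_measurable:
  fixes g :: "real \<Rightarrow> real"
  assumes gm: "g \<in> borel_measurable borel"
  shows "(\<lambda>u. \<integral>v. indicator {s<..u} v * g v \<partial>lborel) \<in> borel_measurable borel"
proof -
  note gm[measurable]
  have "(\<lambda>(u, v). indicator {s<..u} v * g v)
      = (\<lambda>p::real \<times> real. if s < snd p \<and> snd p \<le> fst p then g (snd p) else 0)"
    by (auto simp: indicator_def fun_eq_iff)
  moreover have "\<dots> \<in> borel_measurable (borel \<Otimes>\<^sub>M lborel)" by measurable
  ultimately have "(\<lambda>(u, v). indicator {s<..u} v * g v) \<in> borel_measurable (borel \<Otimes>\<^sub>M lborel)"
    by simp
  then show ?thesis by (rule lborel.borel_measurable_lebesgue_integral)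
qed

lemma integrable_exp_weighted:
  fixes h :: "real \<Rightarrow> real"
  assumes st: "s \<le> t" and hm: "h \<in> borel_measurable borel" and hb: "\<And>u. u \<in> {s<..t} \<Longrightarrow> \<bar>h u\<bar> \<le> C"
  shows "integrable lborel (\<lambda>u. indicator {s<..t} u * (exp (r * u) * h u))"
proof (rule integrable_bounded_on_finite_set[where C="exp (\<bar>r\<bar> * (\<bar>s\<bar> + \<bar>t\<bar>)) * C"])
  show "\<bar>exp (r * u) * h u\<bar> \<le> exp (\<bar>r\<bar> * (\<bar>s\<bar> + \<bar>t\<bar>)) * C" if "u \<in> {s<..t}" for u
    using exp_bound_on_interval[OF that, of r] hb[OF that] by (simp add: abs_mult mult_mono)
qed (use st hm in auto)

text \<open>Fubini for the triangle s < v <= u <= t: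
  int_s^t r e^{ru} (int_s^u g) du = e^{rt} int_s^t g - int_s^t e^{rv} g(v) dv.\<close>
lemma exp_weighted_fubini:
  fixes g :: "real \<Rightarrow> real"
  assumes st: "s \<le> t" and gm: "g \<in> borel_measurable borel" and gb: "\<And>v. \<bar>g v\<bar> \<le> B"
  shows "(\<integral>u. indicator {s<..t} u * (r * exp (r * u) * (\<integral>v. indicator {s<..u} v * g v \<partial>lborel)) \<partial>lborel)
       = exp (r * t) * (\<integral>v. indicator {s<..t} v * g v \<partial>lborel)
         - (\<integral>v. indicator {s<..t} v * (exp (r * v) * g v) \<partial>lborel)"
proof -
  note gm[measurable]
  define E where "E = exp (\<bar>r\<bar> * (\<bar>s\<bar> + \<bar>t\<bar>))"
  have eb: "\<And>u. u \<in> {s<..t} \<Longrightarrow> \<bar>exp (r * u)\<bar> \<le> E" unfolding E_def by (rule exp_bound_on_interval)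
  have E0: "E \<ge> 0" unfolding E_def by simp
  have B0: "B \<ge> 0" using gb[of 0] by linarith
  define K where "K u v = indicator {s<..t} u * (r * exp (r * u)) * (indicator {s<..u} v * g v)" for u v :: real
  have K_eq: "K u v = indicator {s<..t} u * (r * exp (r * u)) * (if s < v \<and> v \<le> u then g v else 0)" for u v
    by (auto simp: K_def indicator_def)
  have Kint: "integrable (lborel \<Otimes>\<^sub>M lborel) (case_prod K)"
  proof (rule integrable_bounded_on_product[OF lborel.sigma_finite_measure_axioms _ _ _ st,
        where B="{s<..t}" and C="\<bar>r\<bar> * E * B"])
    show "case_prod K \<in> borel_measurable (lborel \<Otimes>\<^sub>M lborel)" unfolding K_eq by measurable
    fix u v :: real
    show "\<bar>case_prod K (u, v)\<bar> \<le> \<bar>r\<bar> * E * B * indicator ({s<..t} \<times> {s<..t}) (u, v)"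
    proof (cases "u \<in> {s<..t} \<and> v \<in> {s<..u}")
      case True
      then have "\<bar>case_prod K (u, v)\<bar> = \<bar>r\<bar> * \<bar>exp (r * u)\<bar> * \<bar>g v\<bar>" by (simp add: K_def abs_mult)
      also have "\<dots> \<le> \<bar>r\<bar> * E * B" using eb gb[of v] True E0 by (intro mult_mono mult_left_mono) auto
      finally show ?thesis using True by simp
    qed (use B0 E0 in \<open>auto simp: K_def indicator_def\<close>)
  qed (use st in auto)
  have inner: "(\<integral>u. K u v \<partial>lborel) = indicator {s<..t} v * g v * (exp (r * t) - exp (r * v))" for v
  proof -
    have "(\<integral>u. K u v \<partial>lborel)
        = (\<integral>u. (indicator {s<..t} v * g v) * (indicator {v<..t} u * (r * exp (r * u))) \<partial>lborel)"
    proof (rule integral_cong_AE)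
      show "AE u in lborel. K u v = (indicator {s<..t} v * g v) * (indicator {v<..t} u * (r * exp (r * u)))"
        using AE_lborel_singleton[of v] by eventually_elim (auto simp: K_def indicator_def)
    qed (auto simp: K_eq[abs_def])
    also have "\<dots> = indicator {s<..t} v * g v * (exp (r * t) - exp (r * v))"
      by (cases "v \<in> {s<..t}") (simp_all add: integral_exp_derivative)
    finally show ?thesis .
  qed
  have i1: "integrable lborel (\<lambda>v. indicator {s<..t} v * g v)"
    by (rule integrable_bounded_on_finite_set) (use gb st in auto)
  have i2: "integrable lborel (\<lambda>v. indicator {s<..t} v * (exp (r * v) * g v))"
    by (rule integrable_exp_weighted[OF st gm gb])
  have "(\<integral>u. indicator {s<..t} u * (r * exp (r * u) * (\<integral>v. indicator {s<..u} v * g v \<partial>lborel)) \<partial>lborel)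
      = (\<integral>u. (\<integral>v. K u v \<partial>lborel) \<partial>lborel)"
    unfolding K_def by (subst integral_mult_right_zero) (simp add: mult.assoc)
  also have "\<dots> = (\<integral>v. (\<integral>u. K u v \<partial>lborel) \<partial>lborel)"
    by (rule lborel_pair.Fubini_integral[OF Kint, symmetric])
  also have "\<dots> = (\<integral>v. exp (r * t) * (indicator {s<..t} v * g v) - indicator {s<..t} v * (exp (r * v) * g v) \<partial>lborel)"
    unfolding inner by (rule Bochner_Integration.integral_cong[OF refl]) (simp add: algebra_simps)
  also have "\<dots> = exp (r * t) * (\<integral>v. indicator {s<..t} v * g v \<partial>lborel)
         - (\<integral>v. indicator {s<..t} v * (exp (r * v) * g v) \<partial>lborel)"
    using i1 i2 by simp
  finally show ?thesis .
qed

lemma exp_product_rule: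
  fixes m g :: "real \<Rightarrow> real"
  assumes st: "s \<le> t" and gm: "g \<in> borel_measurable borel" and gb: "\<And>v. \<bar>g v\<bar> \<le> B"
    and mrep: "\<And>u. u \<in> {s..t} \<Longrightarrow> m u = m s + (\<integral>v. indicator {s<..u} v * g v \<partial>lborel)"
  shows "exp (r * t) * m t - exp (r * s) * m s
       = (\<integral>u. indicator {s<..t} u * (exp (r * u) * (g u + r * m u)) \<partial>lborel)"
proof -
  define G where "G u = (\<integral>v. indicator {s<..u} v * g v \<partial>lborel)" for u
  have Gm[measurable]: "G \<in> borel_measurable borel"
    unfolding G_def[abs_def] by (rule indefinite_integral_measurable[OF gm])
  note gm[measurable]
  have B0: "B \<ge> 0" using gb[of 0] by linarith
  have Gb: "\<bar>G u\<bar> \<le> B * (t - s)" if "u \<in> {s<..t}" for u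
  proof -
    have "\<bar>G u\<bar> \<le> B * measure lborel {s<..u}"
      unfolding G_def by (rule integral_bounded_on_finite_set) (use gb that in auto)
    also have "\<dots> \<le> B * (t - s)" using that B0 by (intro mult_left_mono) auto
    finally show ?thesis .
  qed
  have I1: "integrable lborel (\<lambda>u. indicator {s<..t} u * (exp (r * u) * g u))"
    by (rule integrable_exp_weighted[OF st gm gb])
  have "integrable lborel (\<lambda>u. indicator {s<..t} u * (exp (r * u) * (r * m s)))"
    by (rule integrable_exp_weighted[OF st]) auto
  then have I2: "integrable lborel (\<lambda>u. indicator {s<..t} u * (r * exp (r * u) * m s))"
    by (simp add: mult_ac)
  have rG: "\<bar>r * G u\<bar> \<le> \<bar>r\<bar> * (B * (t - s))" if "u \<in> {s<..t}" for u
    using Gb[OF that] by (simp add: abs_mult mult_left_mono)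
  have "integrable lborel (\<lambda>u. indicator {s<..t} u * (exp (r * u) * (r * G u)))"
    by (rule integrable_exp_weighted[OF st _ rG]) measurable
  then have I3: "integrable lborel (\<lambda>u. indicator {s<..t} u * (r * exp (r * u) * G u))"
    by (simp add: mult_ac)
  have "(\<integral>u. indicator {s<..t} u * (exp (r * u) * (g u + r * m u)) \<partial>lborel)
     = (\<integral>u. indicator {s<..t} u * (exp (r * u) * g u) + indicator {s<..t} u * (r * exp (r * u) * m s)
            + indicator {s<..t} u * (r * exp (r * u) * G u) \<partial>lborel)"
  proof (rule Bochner_Integration.integral_cong[OF refl])
    fix u show "indicator {s<..t} u * (exp (r * u) * (g u + r * m u))
     = indicator {s<..t} u * (exp (r * u) * g u) + indicator {s<..t} u * (r * exp (r * u) * m s)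
            + indicator {s<..t} u * (r * exp (r * u) * G u)"
      using mrep[of u] unfolding G_def by (cases "u \<in> {s<..t}") (auto simp: algebra_simps)
  qed
  also have "\<dots> = (\<integral>u. indicator {s<..t} u * (exp (r * u) * g u) \<partial>lborel)
      + m s * (\<integral>u. indicator {s<..t} u * (r * exp (r * u)) \<partial>lborel)
      + (\<integral>u. indicator {s<..t} u * (r * exp (r * u) * G u) \<partial>lborel)"
    using I1 I2 I3 by (simp add: mult.commute mult.left_commute)
  also have "\<dots> = exp (r * t) * G t - exp (r * s) * m s + exp (r * t) * m s"
    unfolding integral_exp_derivative[OF st] exp_weighted_fubini[OF st gm gb, of r, folded G_def]
    by (simp add: algebra_simps)
  also have "\<dots> = exp (r * t) * m t - exp (r * s) * m s"
    using mrep[of t] st unfolding G_def by (simp add: algebra_simps)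
  finally show ?thesis ..
qed

section \<open>Dynkin processes of [0,1]-valued right-continuous processes\<close>

definition dynkin :: "(real \<Rightarrow> 'a \<Rightarrow> real) \<Rightarrow> (real \<Rightarrow> real) \<Rightarrow> (real \<Rightarrow> real) \<Rightarrow> real \<Rightarrow> 'a \<Rightarrow> real" where
  "dynkin X \<phi> q t \<omega> = \<phi> (X t \<omega>) - \<phi> (X 0 \<omega>) - (LINT v:{0..t}|lborel. q (X v \<omega>))"

locale unit_process = prob_space P for P :: "'a measure" +
  fixes X :: "real \<Rightarrow> 'a \<Rightarrow> real"
  assumes X_meas: "\<And>t. X t \<in> borel_measurable P"
    and X_range: "\<And>t \<omega>. \<omega> \<in> space P \<Longrightarrow> X t \<omega> \<in> {0..1}"
    and X_right_cont: "\<And>t \<omega>. \<omega> \<in> space P \<Longrightarrow> 0 \<le> t \<Longrightarrow> continuous (at_right t) (\<lambda>v. X v \<omega>)"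
begin

text \<open>Since X stays in [0,1], a function continuous on [0,1] may be replaced along X by its
  clamped extension, which is globally continuous and bounded.\<close>
lemma path_clamp: "\<omega> \<in> space P \<Longrightarrow> clamp01 (X t \<omega>) = X t \<omega>"
  using clamp01_id X_range by blast

lemma clamped_path_jointly_measurable:
  fixes q :: "real \<Rightarrow> real"
  assumes t: "t \<ge> 0" and q: "continuous_on {0..1} q"
  shows "(\<lambda>p. q (clamp01 (X (time_clamp t (fst p)) (snd p)))) \<in> borel_measurable (lborel \<Otimes>\<^sub>M P)"
proof -
  have "(\<lambda>p. X (time_clamp t (fst p)) (snd p)) \<in> borel_measurable (lborel \<Otimes>\<^sub>M P)"
    by (rule right_continuous_jointly_measurable[OF t X_meas]) (use X_right_cont in auto)
  from measurable_compose[OF this borel_measurable_continuous_onI[OF continuous_on_clamp01_comp[OF q]]]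
  show ?thesis by simp
qed

lemma clamped_path_section_measurable:
  fixes q :: "real \<Rightarrow> real"
  assumes \<omega>: "\<omega> \<in> space P" and t: "t \<ge> 0" and q: "continuous_on {0..1} q"
  shows "(\<lambda>v. q (clamp01 (X (time_clamp t v) \<omega>))) \<in> borel_measurable borel"
  using measurable_compose[OF measurable_Pair2'[OF \<omega>, of lborel] clamped_path_jointly_measurable[OF t q]]
  by simp

text \<open>Time integrals over subsets of [0,t] along X may be computed with the frozen,
  clamped (hence measurable and bounded) integrand.\<close>
lemma time_integral_clamped:
  fixes q :: "real \<Rightarrow> real"
  assumes \<omega>: "\<omega> \<in> space P" and S: "S \<subseteq> {0..t}"
  shows "(LINT v:S|lborel. q (X v \<omega>)) = (\<integral>v. indicator S v * q (clamp01 (X (time_clamp t v) \<omega>)) \<partial>lborel)"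
  unfolding set_lebesgue_integral_def
proof (intro Bochner_Integration.integral_cong refl)
  fix v show "indicator S v *\<^sub>R q (X v \<omega>) = indicator S v * q (clamp01 (X (time_clamp t v) \<omega>))"
  proof (cases "v \<in> S")
    case True
    then have "time_clamp t v = v" using S by (auto intro: time_clamp_id)
    then show ?thesis using True path_clamp[OF \<omega>] by simp
  qed simp
qed

lemma event_integrable:
  fixes q :: "real \<Rightarrow> real"
  assumes A: "A \<in> sets P" and q: "continuous_on {0..1} q"
  shows "integrable P (\<lambda>\<omega>. indicator A \<omega> * q (X u \<omega>))"
proof -
  obtain B where B: "\<And>x. \<bar>q (clamp01 x)\<bar> \<le> B" using clamp01_comp_bounded[OF q] by blast
  have "integrable P (\<lambda>\<omega>. indicator A \<omega> * q (clamp01 (X u \<omega>)))"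
  proof (rule integrable_const_bound[where B=B])
    show "AE \<omega> in P. norm (indicator A \<omega> * q (clamp01 (X u \<omega>))) \<le> B"
      using B by (intro AE_I2) (auto simp: indicator_def intro: order_trans[OF _ B])
    show "(\<lambda>\<omega>. indicator A \<omega> * q (clamp01 (X u \<omega>))) \<in> borel_measurable P"
      using A by (intro borel_measurable_times borel_measurable_indicator measurable_compose[OF X_meas
          borel_measurable_continuous_onI[OF continuous_on_clamp01_comp[OF q]]])
  qed
  then show ?thesis by (rule Bochner_Integration.integrable_cong[OF refl, THEN iffD1, rotated]) (simp add: path_clamp)
qed

lemma dynkin_adapted:
  fixes \<phi> q :: "real \<Rightarrow> real"
  assumes t: "t \<ge> 0" and \<phi>: "continuous_on {0..1} \<phi>" and q: "continuous_on {0..1} q"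
  shows "dynkin X \<phi> q t \<in> borel_measurable (natfilt P X t)" and "integrable P (dynkin X \<phi> q t)"
proof -
  define \<phi>c qc where "\<phi>c x = \<phi> (clamp01 x)" and "qc x = q (clamp01 x)" for x
  have \<phi>m: "\<phi>c \<in> borel_measurable borel" and qm: "qc \<in> borel_measurable borel"
    unfolding \<phi>c_def qc_def
    by (intro borel_measurable_continuous_onI continuous_on_clamp01_comp \<phi> q)+
  obtain B\<phi> Bq where B\<phi>: "\<And>x. \<bar>\<phi>c x\<bar> \<le> B\<phi>" and Bq: "\<And>x. \<bar>qc x\<bar> \<le> Bq"
    unfolding \<phi>c_def qc_def by (metis clamp01_comp_bounded \<phi> q)
  define I where "I \<omega> = (\<integral>v. indicator {0..t} v * qc (X (time_clamp t v) \<omega>) \<partial>lborel)" for \<omega>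
  have eq: "dynkin X \<phi> q t \<omega> = \<phi>c (X t \<omega>) - \<phi>c (X 0 \<omega>) - I \<omega>" if \<omega>: "\<omega> \<in> space P" for \<omega>
    unfolding dynkin_def I_def \<phi>c_def qc_def time_integral_clamped[OF \<omega> order_refl]
    by (simp add: path_clamp[OF \<omega>])
  have meas: "(\<lambda>\<omega>. \<phi>c (X t \<omega>) - \<phi>c (X 0 \<omega>) - I \<omega>) \<in> borel_measurable F"
    if F: "space F = space P" "\<And>u. u \<in> {0..t} \<Longrightarrow> X u \<in> borel_measurable F" for F
  proof -
    have "I \<in> borel_measurable F"
      unfolding I_def by (rule time_integral_measurable[OF t F(2) _ qm]) (use X_right_cont F(1) in auto)
    then show ?thesis
      using t by (intro borel_measurable_diff measurable_compose[OF F(2) \<phi>m]) auto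
  qed
  have "dynkin X \<phi> q t \<in> borel_measurable (natfilt P X t)
      \<longleftrightarrow> (\<lambda>\<omega>. \<phi>c (X t \<omega>) - \<phi>c (X 0 \<omega>) - I \<omega>) \<in> borel_measurable (natfilt P X t)"
    by (rule measurable_cong) (simp add: natfilt_space eq)
  then show "dynkin X \<phi> q t \<in> borel_measurable (natfilt P X t)"
    using meas[OF natfilt_space natfilt_measurable] by blast
  have Ib: "\<bar>I \<omega>\<bar> \<le> Bq * t" if \<omega>: "\<omega> \<in> space P" for \<omega>
    using integral_bounded_on_finite_set[of "{0..t}", OF _ _ clamped_path_section_measurable[OF \<omega> t q]] Bq t
    unfolding I_def qc_def by simp
  have "\<bar>\<phi>c (X t \<omega>) - \<phi>c (X 0 \<omega>) - I \<omega>\<bar> \<le> 2 * B\<phi> + Bq * t" if \<omega>: "\<omega> \<in> space P" for \<omega>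
    using B\<phi>[of "X t \<omega>"] B\<phi>[of "X 0 \<omega>"] Ib[OF \<omega>] unfolding abs_le_iff by linarith
  then have "integrable P (\<lambda>\<omega>. \<phi>c (X t \<omega>) - \<phi>c (X 0 \<omega>) - I \<omega>)"
    using meas[OF refl X_meas] by (intro integrable_const_bound[where B="2 * B\<phi> + Bq * t"] AE_I2) auto
  then show "integrable P (dynkin X \<phi> q t)"
    by (rule Bochner_Integration.integrable_cong[OF refl, THEN iffD1, rotated]) (simp add: eq)
qed

lemma event_mean_measurable:
  fixes q :: "real \<Rightarrow> real"
  assumes A: "A \<in> sets P" and t: "t \<ge> 0" and q: "continuous_on {0..1} q"
  shows "(\<lambda>v. \<integral>\<omega>. indicator A \<omega> * q (X (time_clamp t v) \<omega>) \<partial>P) \<in> borel_measurable borel"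
proof -
  note J = clamped_path_jointly_measurable[OF t q]
  have "(\<lambda>p. indicator A (snd p) * q (clamp01 (X (time_clamp t (fst p)) (snd p))))
      \<in> borel_measurable (lborel \<Otimes>\<^sub>M P)"
    by (intro borel_measurable_times J measurable_compose[OF measurable_snd borel_measurable_indicator[OF A]])
  then have "(\<lambda>(v, \<omega>). indicator A \<omega> * q (clamp01 (X (time_clamp t v) \<omega>))) \<in> borel_measurable (lborel \<Otimes>\<^sub>M P)"
    by (simp add: case_prod_beta')
  from borel_measurable_lebesgue_integral[OF this]
  have "(\<lambda>v. \<integral>\<omega>. indicator A \<omega> * q (clamp01 (X (time_clamp t v) \<omega>)) \<partial>P) \<in> borel_measurable borel"
    by simp
  then show ?thesis by (simp add: path_clamp cong: Bochner_Integration.integral_cong)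
qed

lemma event_mean_bounded:
  fixes q :: "real \<Rightarrow> real"
  assumes A: "A \<in> sets P" and q: "continuous_on {0..1} q"
  obtains B where "\<And>u. \<bar>\<integral>\<omega>. indicator A \<omega> * q (X u \<omega>) \<partial>P\<bar> \<le> B"
proof -
  obtain B where B: "\<And>x. x \<in> {0..1} \<Longrightarrow> \<bar>q x\<bar> \<le> B" using continuous_on_01_bounded[OF q] by blast
  have "\<bar>\<integral>\<omega>. indicator A \<omega> * q (X u \<omega>) \<partial>P\<bar> \<le> \<bar>B\<bar>" for u
  proof (rule integral_abs_bound[THEN order_trans])
    have "(\<integral>\<omega>. \<bar>indicator A \<omega> * q (X u \<omega>)\<bar> \<partial>P) \<le> (\<integral>\<omega>. \<bar>B\<bar> \<partial>P)"
      using event_integrable[OF A q] B X_range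
      by (intro integral_mono) (auto simp: indicator_def intro: order_trans[OF B abs_ge_self])
    then show "(\<integral>\<omega>. \<bar>indicator A \<omega> * q (X u \<omega>)\<bar> \<partial>P) \<le> \<bar>B\<bar>" by (simp add: prob_space)
  qed
  then show ?thesis by (rule that)
qed

lemma event_time_fubini:
  fixes q :: "real \<Rightarrow> real"
  assumes A: "A \<in> sets P" and ab: "0 \<le> a" "a \<le> b" "b \<le> T" and q: "continuous_on {0..1} q"
  shows "(\<integral>\<omega>. indicator A \<omega> * (LINT v:{a<..b}|lborel. q (X v \<omega>)) \<partial>P)
       = (\<integral>v. indicator {a<..b} v * (\<integral>\<omega>. indicator A \<omega> * q (X (time_clamp T v) \<omega>) \<partial>P) \<partial>lborel)"
proof -
  interpret PP: pair_sigma_finite lborel P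
    by (intro pair_sigma_finite.intro lborel.sigma_finite_measure_axioms sigma_finite_measure_axioms)
  have T: "T \<ge> 0" using ab by linarith
  obtain C where C: "\<And>x. \<bar>q (clamp01 x)\<bar> \<le> C" using clamp01_comp_bounded[OF q] by blast
  note J = clamped_path_jointly_measurable[OF T q]
  define f where "f v \<omega> = indicator {a<..b} v * (indicator A \<omega> * q (clamp01 (X (time_clamp T v) \<omega>)))" for v \<omega>
  have fi: "integrable (lborel \<Otimes>\<^sub>M P) (case_prod f)"
  proof (rule integrable_bounded_on_product[OF sigma_finite_measure_axioms _ _ _ ab(2),
        where B="space P" and C="\<bar>C\<bar>"])
    have "(\<lambda>p. indicator {a<..b} (fst p) * (indicator A (snd p) * q (clamp01 (X (time_clamp T (fst p)) (snd p)))))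
      \<in> borel_measurable (lborel \<Otimes>\<^sub>M P)"
      by (intro borel_measurable_times J measurable_compose[OF measurable_snd borel_measurable_indicator[OF A]]
          measurable_compose[OF measurable_fst borel_measurable_indicator]) auto
    then show "case_prod f \<in> borel_measurable (lborel \<Otimes>\<^sub>M P)"
      unfolding f_def by (simp add: case_prod_beta')
    fix u \<omega> assume "\<omega> \<in> space P"
    then show "\<bar>case_prod f (u, \<omega>)\<bar> \<le> \<bar>C\<bar> * indicator ({a<..b} \<times> space P) (u, \<omega>)"
      using C[of "X (time_clamp T u) \<omega>"] by (auto simp: f_def indicator_def abs_mult)
  qed (auto simp: emeasure_space_1)
  have "(\<integral>\<omega>. indicator A \<omega> * (LINT v:{a<..b}|lborel. q (X v \<omega>)) \<partial>P) = (\<integral>\<omega>. (\<integral>v. f v \<omega> \<partial>lborel) \<partial>P)"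
  proof (rule Bochner_Integration.integral_cong[OF refl])
    fix \<omega> assume \<omega>: "\<omega> \<in> space P"
    have S: "{a<..b} \<subseteq> {0..T}" using ab by auto
    show "indicator A \<omega> * (LINT v:{a<..b}|lborel. q (X v \<omega>)) = (\<integral>v. f v \<omega> \<partial>lborel)"
      unfolding time_integral_clamped[OF \<omega> S] f_def
      by (subst integral_mult_right_zero[symmetric]) (simp add: algebra_simps)
  qed
  also have "\<dots> = (\<integral>v. (\<integral>\<omega>. f v \<omega> \<partial>P) \<partial>lborel)" by (rule PP.Fubini_integral[OF fi])
  also have "\<dots> = (\<integral>v. indicator {a<..b} v * (\<integral>\<omega>. indicator A \<omega> * q (X (time_clamp T v) \<omega>) \<partial>P) \<partial>lborel)"
    unfolding f_def by (simp add: path_clamp cong: Bochner_Integration.integral_cong)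
  finally show ?thesis .
qed

lemma dynkin_increment_on_event:
  fixes \<phi> q :: "real \<Rightarrow> real"
  assumes A: "A \<in> sets P" and su: "0 \<le> s" "s \<le> u" "u \<le> T"
    and \<phi>: "continuous_on {0..1} \<phi>" and q: "continuous_on {0..1} q"
  shows "(LINT \<omega>:A|P. dynkin X \<phi> q u \<omega>) - (LINT \<omega>:A|P. dynkin X \<phi> q s \<omega>)
     = (\<integral>\<omega>. indicator A \<omega> * \<phi> (X u \<omega>) \<partial>P) - (\<integral>\<omega>. indicator A \<omega> * \<phi> (X s \<omega>) \<partial>P)
       - (\<integral>v. indicator {s<..u} v * (\<integral>\<omega>. indicator A \<omega> * q (X (time_clamp T v) \<omega>) \<partial>P) \<partial>lborel)"
proof -
  define I where "I \<omega> = (LINT v:{s<..u}|lborel. q (X v \<omega>))" for \<omega>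
  obtain Bq where Bq: "\<And>x. \<bar>q (clamp01 x)\<bar> \<le> Bq" using clamp01_comp_bounded[OF q] by blast
  have diff: "dynkin X \<phi> q u \<omega> - dynkin X \<phi> q s \<omega> = \<phi> (X u \<omega>) - \<phi> (X s \<omega>) - I \<omega>"
    if \<omega>: "\<omega> \<in> space P" for \<omega>
  proof -
    have "{0..s} \<subseteq> {0..u}" "{s<..u} \<subseteq> {0..u}" using su by auto
    note e = time_integral_clamped[OF \<omega> order_refl[of "{0..u}"]] time_integral_clamped[OF \<omega> this(1)]
      time_integral_clamped[OF \<omega> this(2)]
    have "(LINT v:{0..u}|lborel. q (X v \<omega>)) - (LINT v:{0..s}|lborel. q (X v \<omega>)) = I \<omega>"
      unfolding I_def e
      by (rule time_integral_split[OF su(1,2) clamped_path_section_measurable[OF \<omega> _ q] Bq]) (use su in auto)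
    then show ?thesis unfolding dynkin_def by simp
  qed
  have i\<phi>: "integrable P (\<lambda>\<omega>. indicator A \<omega> * \<phi> (X w \<omega>))" for w by (rule event_integrable[OF A \<phi>])
  have iY: "integrable P (\<lambda>\<omega>. indicator A \<omega> * dynkin X \<phi> q w \<omega>)" if "w \<ge> 0" for w
    using integrable_real_mult_indicator[OF A dynkin_adapted(2)[OF that \<phi> q]] by (simp add: mult.commute)
  have "(\<integral>\<omega>. indicator A \<omega> * I \<omega> \<partial>P)
      = (\<integral>\<omega>. (indicator A \<omega> * \<phi> (X u \<omega>) - indicator A \<omega> * \<phi> (X s \<omega>))
             - (indicator A \<omega> * dynkin X \<phi> q u \<omega> - indicator A \<omega> * dynkin X \<phi> q s \<omega>) \<partial>P)"
  proof (rule Bochner_Integration.integral_cong[OF refl])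
    fix \<omega> assume "\<omega> \<in> space P"
    then have e: "I \<omega> = \<phi> (X u \<omega>) - \<phi> (X s \<omega>) - (dynkin X \<phi> q u \<omega> - dynkin X \<phi> q s \<omega>)"
      using diff by simp
    show "indicator A \<omega> * I \<omega> = (indicator A \<omega> * \<phi> (X u \<omega>) - indicator A \<omega> * \<phi> (X s \<omega>))
             - (indicator A \<omega> * dynkin X \<phi> q u \<omega> - indicator A \<omega> * dynkin X \<phi> q s \<omega>)"
      unfolding e by (simp add: algebra_simps)
  qed
  also have "\<dots> = (\<integral>\<omega>. indicator A \<omega> * \<phi> (X u \<omega>) \<partial>P) - (\<integral>\<omega>. indicator A \<omega> * \<phi> (X s \<omega>) \<partial>P)
      - ((LINT \<omega>:A|P. dynkin X \<phi> q u \<omega>) - (LINT \<omega>:A|P. dynkin X \<phi> q s \<omega>))"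
    using i\<phi>[of u] i\<phi>[of s] iY[of u] iY[of s] su unfolding set_lebesgue_integral_def by simp
  finally show ?thesis
    using event_time_fubini[OF A su q] unfolding I_def by linarith
qed

lemma martingale_event_mean:
  fixes \<phi> q :: "real \<Rightarrow> real"
  assumes mart: "martingale P (natfilt P X) (dynkin X \<phi> q)" and A: "A \<in> sets (natfilt P X s)"
    and su: "0 \<le> s" "s \<le> u" "u \<le> T"
    and \<phi>: "continuous_on {0..1} \<phi>" and q: "continuous_on {0..1} q"
  shows "(\<integral>\<omega>. indicator A \<omega> * \<phi> (X u \<omega>) \<partial>P) = (\<integral>\<omega>. indicator A \<omega> * \<phi> (X s \<omega>) \<partial>P)
       + (\<integral>v. indicator {s<..u} v * (\<integral>\<omega>. indicator A \<omega> * q (X (time_clamp T v) \<omega>) \<partial>P) \<partial>lborel)"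
proof -
  have "(LINT \<omega>:A|P. dynkin X \<phi> q u \<omega>) = (LINT \<omega>:A|P. dynkin X \<phi> q s \<omega>)"
    using mart su A unfolding martingale_def by blast
  with dynkin_increment_on_event[OF natfilt_subset[OF X_meas A] su \<phi> q] show ?thesis by linarith
qed

end

section \<open>Doob h-transforms by x(1-x) e^{rt}\<close>

text \<open>Rh is the h-transform of R by H(t,x) = het x * exp (r t): on path events up to time t,
  the law of Rh has density H(t, R_t) / c0 with respect to the law of R.\<close>
locale doob_h_transform = M: unit_process M R + N: unit_process N Rh
  for M :: "'a measure" and R and N :: "'b measure" and Rh +
  fixes r c0 :: real
  assumes c0_pos: "c0 > 0"
    and law: "\<And>t A. t \<ge> 0 \<Longrightarrow> A \<in> sets (path_space t) \<Longrightarrow>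
      measure N {\<omega> \<in> space N. restrict (\<lambda>s. Rh s \<omega>) {0..t} \<in> A}
      = (\<integral>\<omega>. indicator A (restrict (\<lambda>s. R s \<omega>) {0..t}) * (het (R t \<omega>) * exp (r * t)) \<partial>M) / c0"
begin

definition path_density :: "real \<Rightarrow> (real \<Rightarrow> real) \<Rightarrow> real" where
  "path_density t p = het (clamp01 (p t)) * (exp (r * t) / c0)"

lemma path_density_measurable:
  assumes t: "t \<ge> 0" shows "path_density t \<in> borel_measurable (path_space t)"
proof -
  have "continuous_on {0..1} het" unfolding het_def by (intro continuous_intros)
  then have h: "(\<lambda>x. het (clamp01 x)) \<in> borel_measurable borel"
    by (intro borel_measurable_continuous_onI continuous_on_clamp01_comp)
  have "(\<lambda>p::real \<Rightarrow> real. p t) \<in> measurable (path_space t) borel"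
    using t by (intro measurable_component_singleton) auto
  from measurable_compose[OF this h] show ?thesis
    unfolding path_density_def[abs_def] by (rule borel_measurable_times) simp
qed

lemma path_density_bounds: "0 \<le> path_density t p" "path_density t p \<le> exp (r * t) / c0"
proof -
  have e: "0 \<le> exp (r * t) / c0" using c0_pos by simp
  show "0 \<le> path_density t p"
    unfolding path_density_def by (rule mult_nonneg_nonneg[OF het_clamp01_bounds(1) e])
  show "path_density t p \<le> exp (r * t) / c0"
    unfolding path_density_def by (rule mult_left_le_one_le[OF e het_clamp01_bounds])
qed

lemma path_density_path:
  assumes "\<omega> \<in> space M" "t \<ge> 0"
  shows "path_density t (restrict (\<lambda>s. R s \<omega>) {0..t}) = het (R t \<omega>) * exp (r * t) / c0"
  unfolding path_density_def using assms M.path_clamp[OF assms(1)] by simp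

lemma law_density:
  assumes t: "t \<ge> 0"
  shows "distr N (path_space t) (\<lambda>\<omega>. restrict (\<lambda>s. Rh s \<omega>) {0..t})
       = density (distr M (path_space t) (\<lambda>\<omega>. restrict (\<lambda>s. R s \<omega>) {0..t})) (\<lambda>p. ennreal (path_density t p))"
    (is "distr N _ ?Ph = density (distr M _ ?P) ?d")
proof (rule measure_eqI)
  have Pm[measurable]: "?P \<in> measurable M (path_space t)" by (rule path_measurable[OF M.X_meas])
  have Phm: "?Ph \<in> measurable N (path_space t)" by (rule path_measurable[OF N.X_meas])
  note dm[measurable] = path_density_measurable[OF t]
  show "sets (distr N (path_space t) ?Ph) = sets (density (distr M (path_space t) ?P) ?d)" by simp
  fix A assume "A \<in> sets (distr N (path_space t) ?Ph)"
  then have A[measurable]: "A \<in> sets (path_space t)" by simp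
  have "(\<lambda>\<omega>. indicator A (?P \<omega>) * path_density t (?P \<omega>)) \<in> borel_measurable M" by measurable
  then have int: "integrable M (\<lambda>\<omega>. indicator A (?P \<omega>) * path_density t (?P \<omega>))"
    by (rule M.integrable_const_bound[where B="exp (r * t) / c0", rotated])
       (intro AE_I2, use path_density_bounds c0_pos in \<open>simp add: indicator_def\<close>)
  have "emeasure (distr N (path_space t) ?Ph) A = ennreal (measure N (?Ph -` A \<inter> space N))"
    by (simp add: emeasure_distr[OF Phm A] N.emeasure_eq_measure)
  also have "?Ph -` A \<inter> space N = {\<omega> \<in> space N. ?Ph \<omega> \<in> A}" by auto
  also have "measure N \<dots> = (\<integral>\<omega>. indicator A (?P \<omega>) * (het (R t \<omega>) * exp (r * t)) / c0 \<partial>M)"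
    unfolding law[OF t A] by simp
  also have "\<dots> = (\<integral>\<omega>. indicator A (?P \<omega>) * path_density t (?P \<omega>) \<partial>M)"
    by (rule Bochner_Integration.integral_cong[OF refl]) (simp add: path_density_path t)
  also have "ennreal \<dots> = (\<integral>\<^sup>+\<omega>. ennreal (path_density t (?P \<omega>)) * indicator A (?P \<omega>) \<partial>M)"
    using int path_density_bounds
    by (subst nn_integral_eq_integral[symmetric]) (auto intro!: nn_integral_cong simp: indicator_def)
  also have "\<dots> = (\<integral>\<^sup>+p. ?d p * indicator A p \<partial>distr M (path_space t) ?P)"
    by (rule nn_integral_distr[OF Pm, symmetric]) measurable
  also have "\<dots> = emeasure (density (distr M (path_space t) ?P) ?d) A"
    by (subst emeasure_density) auto
  finally show "emeasure (distr N (path_space t) ?Ph) A = emeasure (density (distr M (path_space t) ?P) ?d) A" .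
qed

lemma path_transfer:
  fixes g :: "(real \<Rightarrow> real) \<Rightarrow> real"
  assumes t: "t \<ge> 0" and g: "g \<in> borel_measurable (path_space t)"
  shows "(\<integral>\<omega>. g (restrict (\<lambda>s. Rh s \<omega>) {0..t}) \<partial>N)
       = (\<integral>\<omega>. g (restrict (\<lambda>s. R s \<omega>) {0..t}) * (het (R t \<omega>) * exp (r * t)) \<partial>M) / c0"
proof -
  let ?P = "\<lambda>\<omega>. restrict (\<lambda>s. R s \<omega>) {0..t}" and ?Ph = "\<lambda>\<omega>. restrict (\<lambda>s. Rh s \<omega>) {0..t}"
  have "(\<integral>\<omega>. g (?Ph \<omega>) \<partial>N) = integral\<^sup>L (distr N (path_space t) ?Ph) g"
    by (rule integral_distr[OF path_measurable[OF N.X_meas] g, symmetric])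
  also have "\<dots> = (\<integral>p. path_density t p *\<^sub>R g p \<partial>distr M (path_space t) ?P)"
    unfolding law_density[OF t]
    by (rule integral_density) (use g path_density_measurable[OF t] path_density_bounds in auto)
  also have "\<dots> = (\<integral>\<omega>. path_density t (?P \<omega>) * g (?P \<omega>) \<partial>M)"
    by (subst integral_distr[OF path_measurable[OF M.X_meas]]) (use g path_density_measurable[OF t] in auto)
  also have "\<dots> = (\<integral>\<omega>. g (?P \<omega>) * (het (R t \<omega>) * exp (r * t)) \<partial>M) / c0"
    by (subst integral_divide_zero[symmetric], rule Bochner_Integration.integral_cong)
       (simp_all add: path_density_path t)
  finally show ?thesis .
qed

lemma event_transfer:
  assumes A: "A \<in> sets (natfilt N Rh s)" and s: "0 \<le> s"
  obtains A' where "A' \<in> sets (natfilt M R s)"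
    "\<And>u q. s \<le> u \<Longrightarrow> continuous_on {0..1} q \<Longrightarrow>
      (\<integral>\<omega>. indicator A \<omega> * q (Rh u \<omega>) \<partial>N)
        = exp (r * u) / c0 * (\<integral>\<omega>. indicator A' \<omega> * (het (R u \<omega>) * q (R u \<omega>)) \<partial>M)"
proof -
  obtain B where B: "B \<in> sets (path_space s)" and AB: "A = (\<lambda>\<omega>. restrict (\<lambda>v. Rh v \<omega>) {0..s}) -` B \<inter> space N"
    using A unfolding natfilt_sets by blast
  define A' where "A' = (\<lambda>\<omega>. restrict (\<lambda>v. R v \<omega>) {0..s}) -` B \<inter> space M"
  have A': "A' \<in> sets (natfilt M R s)" unfolding natfilt_sets A'_def using B by blast
  have "(\<integral>\<omega>. indicator A \<omega> * q (Rh u \<omega>) \<partial>N)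
      = exp (r * u) / c0 * (\<integral>\<omega>. indicator A' \<omega> * (het (R u \<omega>) * q (R u \<omega>)) \<partial>M)"
    if su: "s \<le> u" and q: "continuous_on {0..1} q" for u and q :: "real \<Rightarrow> real"
  proof -
    define g where "g p = indicator B (restrict p {0..s}) * q (clamp01 (p u))" for p :: "real \<Rightarrow> real"
    have gm: "g \<in> borel_measurable (path_space u)"
    proof -
      have "(\<lambda>p::real \<Rightarrow> real. restrict p {0..s}) \<in> measurable (path_space u) (path_space s)"
        using su by (intro measurable_restrict_subset) auto
      moreover have "(\<lambda>p::real \<Rightarrow> real. p u) \<in> measurable (path_space u) borel"
        using s su by (intro measurable_component_singleton) auto
      ultimately show ?thesis unfolding g_def
        by (intro borel_measurable_times measurable_compose[OF _ borel_measurable_indicator[OF B]]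
            measurable_compose[OF _ borel_measurable_continuous_onI[OF continuous_on_clamp01_comp[OF q]]])
    qed
    have rr: "restrict (restrict p {0..u}) {0..s} = restrict p {0..s}" for p :: "real \<Rightarrow> real"
      using su by (auto simp: restrict_def fun_eq_iff)
    have "(\<integral>\<omega>. indicator A \<omega> * q (Rh u \<omega>) \<partial>N) = (\<integral>\<omega>. g (restrict (\<lambda>v. Rh v \<omega>) {0..u}) \<partial>N)"
      by (rule Bochner_Integration.integral_cong[OF refl])
         (use s su in \<open>auto simp: g_def rr AB indicator_def N.path_clamp\<close>)
    also have "\<dots> = (\<integral>\<omega>. g (restrict (\<lambda>v. R v \<omega>) {0..u}) * (het (R u \<omega>) * exp (r * u)) \<partial>M) / c0"
      using s su by (intro path_transfer gm) auto
    also have "(\<integral>\<omega>. g (restrict (\<lambda>v. R v \<omega>) {0..u}) * (het (R u \<omega>) * exp (r * u)) \<partial>M)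
        = (\<integral>\<omega>. exp (r * u) * (indicator A' \<omega> * (het (R u \<omega>) * q (R u \<omega>))) \<partial>M)"
      by (rule Bochner_Integration.integral_cong[OF refl])
         (use s su in \<open>auto simp: g_def rr A'_def indicator_def M.path_clamp\<close>)
    finally show ?thesis by simp
  qed
  with A' show ?thesis by (rule that)
qed

text \<open>On an event A in the past of time s, the means E[1_A f(Rh_u)] equal e^{ru} m(u)/c0 with
  m(u) = E[1_A' het f (R_u)]; the martingale property of R describes m, and the product rule
  for e^{ru} m(u) gives exactly the compensator int E[1_A psi(Rh_v)] dv.\<close>
theorem h_transform_dynkin_martingale:
  fixes f g \<psi> :: "real \<Rightarrow> real"
  assumes f: "continuous_on {0..1} f" and g: "continuous_on {0..1} g" and \<psi>: "continuous_on {0..1} \<psi>"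
    and mart: "martingale M (natfilt M R) (dynkin R (\<lambda>x. het x * f x) g)"
    and ident: "\<And>x. x \<in> {0..1} \<Longrightarrow> het x * \<psi> x = g x + r * (het x * f x)"
  shows "martingale N (natfilt N Rh) (dynkin Rh f \<psi>)"
  unfolding martingale_def
proof (intro conjI allI impI)
  fix t :: real assume "0 \<le> t"
  then show "integrable N (dynkin Rh f \<psi> t)" "dynkin Rh f \<psi> t \<in> borel_measurable (natfilt N Rh t)"
    using N.dynkin_adapted[OF _ f \<psi>] by auto
next
  fix s t :: real and A assume s: "0 \<le> s" and st: "s \<le> t" and A: "A \<in> sets (natfilt N Rh s)"
  obtain A' where A': "A' \<in> sets (natfilt M R s)" and transfer: "\<And>u q. s \<le> u \<Longrightarrow> continuous_on {0..1} q \<Longrightarrow>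
      (\<integral>\<omega>. indicator A \<omega> * q (Rh u \<omega>) \<partial>N)
        = exp (r * u) / c0 * (\<integral>\<omega>. indicator A' \<omega> * (het (R u \<omega>) * q (R u \<omega>)) \<partial>M)"
    using event_transfer[OF A s] by blast
  have A'M: "A' \<in> sets M" by (rule natfilt_subset[OF M.X_meas A'])
  have hf: "continuous_on {0..1} (\<lambda>x. het x * f x)" using f unfolding het_def by (intro continuous_intros)
  define m where "m u = (\<integral>\<omega>. indicator A' \<omega> * (het (R u \<omega>) * f (R u \<omega>)) \<partial>M)" for u
  define gt where "gt v = (\<integral>\<omega>. indicator A' \<omega> * g (R (time_clamp t v) \<omega>) \<partial>M)" for v
  have gtm: "gt \<in> borel_measurable borel"
    unfolding gt_def[abs_def] by (rule M.event_mean_measurable[OF A'M _ g]) (use s st in auto)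
  obtain Bg where gtb: "\<And>v. \<bar>gt v\<bar> \<le> Bg"
    unfolding gt_def using M.event_mean_bounded[OF A'M g] by metis
  have mrep: "m u = m s + (\<integral>v. indicator {s<..u} v * gt v \<partial>lborel)" if "u \<in> {s..t}" for u
    using M.martingale_event_mean[OF mart A' s _ _ hf g, of u t] that unfolding m_def gt_def by simp
  have f_mean: "(\<integral>\<omega>. indicator A \<omega> * f (Rh u \<omega>) \<partial>N) = exp (r * u) / c0 * m u" if "s \<le> u" for u
    unfolding m_def by (rule transfer[OF that f])
  have \<psi>_mean: "indicator {s<..t} v * (\<integral>\<omega>. indicator A \<omega> * \<psi> (Rh (time_clamp t v) \<omega>) \<partial>N)
      = indicator {s<..t} v * (exp (r * v) * (gt v + r * m v)) / c0" for v
  proof (cases "v \<in> {s<..t}")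
    case True
    then have ctv: "time_clamp t v = v" using s by (simp add: time_clamp_id)
    have "(\<integral>\<omega>. indicator A' \<omega> * (het (R v \<omega>) * \<psi> (R v \<omega>)) \<partial>M)
        = (\<integral>\<omega>. indicator A' \<omega> * g (R v \<omega>) + r * (indicator A' \<omega> * (het (R v \<omega>) * f (R v \<omega>))) \<partial>M)"
    proof (rule Bochner_Integration.integral_cong[OF refl])
      fix \<omega> assume \<omega>: "\<omega> \<in> space M"
      show "indicator A' \<omega> * (het (R v \<omega>) * \<psi> (R v \<omega>))
          = indicator A' \<omega> * g (R v \<omega>) + r * (indicator A' \<omega> * (het (R v \<omega>) * f (R v \<omega>)))"
        unfolding ident[OF M.X_range[OF \<omega>]] by (simp add: algebra_simps)
    qed
    also have "\<dots> = gt v + r * m v"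
      unfolding gt_def m_def ctv
      using M.event_integrable[OF A'M g, of v] M.event_integrable[OF A'M hf, of v] by simp
    finally show ?thesis using transfer[of v \<psi>] True \<psi> unfolding ctv by simp
  qed simp
  have "(LINT \<omega>:A|N. dynkin Rh f \<psi> t \<omega>) - (LINT \<omega>:A|N. dynkin Rh f \<psi> s \<omega>)
      = (exp (r * t) * m t - exp (r * s) * m s) / c0
        - (\<integral>v. indicator {s<..t} v * (exp (r * v) * (gt v + r * m v)) \<partial>lborel) / c0"
    unfolding N.dynkin_increment_on_event[OF natfilt_subset[OF N.X_meas A] s st order_refl f \<psi>]
      f_mean[OF st] f_mean[OF order_refl] \<psi>_mean integral_divide_zero
    by (simp add: diff_divide_distrib)
  also have "\<dots> = 0"
    using exp_product_rule[OF st gtm gtb mrep] by simp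
  finally show "(LINT \<omega>:A|N. dynkin Rh f \<psi> t \<omega>) = (LINT \<omega>:A|N. dynkin Rh f \<psi> s \<omega>)" by simp
qed

end

text \<open>R^h is a Doob h-transform of R in the sense of the locale; the transfer principle
  applies with g = G (het f), and the generator identity supplies psi = G0 f + G1 f.\<close>
theorem proposition2p7:
  fixes c :: real and \<nu> :: "real measure"
    and M :: "'a measure" and R :: "real \<Rightarrow> 'a \<Rightarrow> real"
    and N :: "'b measure" and Rh :: "real \<Rightarrow> 'b \<Rightarrow> real"
    and f f1 f2 :: "real \<Rightarrow> real"
  assumes c: "c \<ge> 0"
    and nu_sets: "sets \<nu> = sets borel"
    and nu_supp: "emeasure \<nu> (UNIV - {0<..1}) = 0"
    and nu_fin: "(\<integral>\<^sup>+ x. ennreal (x^2) \<partial>\<nu>) < \<infinity>"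
    \<comment> \<open>R: the generalized Fleming--Viot process with generator G, on the probability space M\<close>
    and M: "prob_space M"
    and R_meas: "\<And>t. R t \<in> borel_measurable M"
    and R_range: "\<And>t \<omega>. \<omega> \<in> space M \<Longrightarrow> R t \<omega> \<in> {0..1}"
    and R_cadlag: "\<And>\<omega>. \<omega> \<in> space M \<Longrightarrow> cadlag (\<lambda>t. R t \<omega>)"
    and R_gen: "\<And>g g1 g2. C2_01 g g1 g2 \<Longrightarrow>
        martingale M (natfilt M R)
          (\<lambda>t \<omega>. g (R t \<omega>) - g (R 0 \<omega>) - (LINT s:{0..t}|lborel. genG c \<nu> g g2 (R s \<omega>)))"
    and R0: "(\<integral>\<omega>. R 0 \<omega> * (1 - R 0 \<omega>) \<partial>M) > 0"
    \<comment> \<open>Rh: the Doob h-transform of R by H, on the probability space N\<close>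
    and N: "prob_space N"
    and Rh_meas: "\<And>t. Rh t \<in> borel_measurable N"
    and Rh_range: "\<And>t \<omega>. \<omega> \<in> space N \<Longrightarrow> Rh t \<omega> \<in> {0..1}"
    and Rh_cadlag: "\<And>\<omega>. \<omega> \<in> space N \<Longrightarrow> cadlag (\<lambda>t. Rh t \<omega>)"
    and Rh_law: "\<And>t A. t \<ge> 0 \<Longrightarrow> A \<in> sets (\<Pi>\<^sub>M s\<in>{0..t}. borel) \<Longrightarrow>
        measure N {\<omega> \<in> space N. restrict (\<lambda>s. Rh s \<omega>) {0..t} \<in> A}
        = (\<integral>\<omega>. indicator A (restrict (\<lambda>s. R s \<omega>) {0..t}) * Hfun c \<nu> t (R t \<omega>) \<partial>M)
          / (\<integral>\<omega>. Hfun c \<nu> 0 (R 0 \<omega>) \<partial>M)"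
    and f: "C2_01 f f1 f2"
  shows "martingale N (natfilt N Rh)
          (\<lambda>t \<omega>. f (Rh t \<omega>) - f (Rh 0 \<omega>)
             - (LINT s:{0..t}|lborel. genG0 c \<nu> f f1 (Rh s \<omega>) + genG1 c \<nu> f f2 (Rh s \<omega>)))"
proof -
  define c0 where "c0 = (\<integral>\<omega>. Hfun c \<nu> 0 (R 0 \<omega>) \<partial>M)"
  have H: "Hfun c \<nu> t x = het x * exp (r2 c \<nu> * t)" for t x unfolding Hfun_def het_def by simp
  have "doob_h_transform M R N Rh (r2 c \<nu>) c0"
    unfolding doob_h_transform_def doob_h_transform_axioms_def unit_process_def unit_process_axioms_def
    using M N R_meas R_range Rh_meas Rh_range R_cadlag Rh_cadlag R0 Rh_law
    unfolding c0_def H cadlag_def by (simp add: het_def)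
  then interpret doob_h_transform M R N Rh "r2 c \<nu>" c0 .
  define \<phi>2 where "\<phi>2 x = - 2 * f x + 2 * (1 - 2 * x) * f1 x + het x * f2 x" for x
  have C\<phi>: "C2_01 (\<lambda>x. het x * f x) (\<lambda>x. (1 - 2 * x) * f x + het x * f1 x) \<phi>2"
    unfolding \<phi>2_def[abs_def] by (rule C2_01_mult_het[OF f])
  have mart: "martingale M (natfilt M R) (dynkin R (\<lambda>x. het x * f x) (genG c \<nu> (\<lambda>x. het x * f x) \<phi>2))"
    using R_gen[OF C\<phi>] unfolding dynkin_def[abs_def] .
  note cont = generators_continuous[OF nu_sets nu_fin]
  have "martingale N (natfilt N Rh) (dynkin Rh f (\<lambda>x. genG0 c \<nu> f f1 x + genG1 c \<nu> f f2 x))"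
  proof (rule h_transform_dynkin_martingale[OF C2_01_continuous(1)[OF f] cont(3)[OF C\<phi>] _ mart])
    show "continuous_on {0..1} (\<lambda>x. genG0 c \<nu> f f1 x + genG1 c \<nu> f f2 x)"
      using cont(1,2)[OF f] by (rule continuous_on_add)
    show "het x * (genG0 c \<nu> f f1 x + genG1 c \<nu> f f2 x)
        = genG c \<nu> (\<lambda>x. het x * f x) \<phi>2 x + r2 c \<nu> * (het x * f x)" if "x \<in> {0..1}" for x
      using generator_identity[OF nu_sets nu_fin f that] unfolding \<phi>2_def[abs_def] .
  qed
  then show ?thesis unfolding dynkin_def[abs_def] .
qed
end
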